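(* Let $G$ be a finite group, $p$ a prime not dividing $|G|$, $m\ge1$, and let $M\neq\{0\}$ be a finite module over the group ring $(\mathbb{Z}/p^m\mathbb{Z})[G]$. Then: 1) if the exponent of $M$ is $p^k$ and every proper submodule of $M$ has exponent smaller than $p^k$, then a) $M$ is homogeneous, i.e. a direct sum of cyclic groups of order $p^k$; b) all layers $p^iM/p^{i+1}M$, $i\in\{0,\dots,k-1\}$, are isomorphic simple $G$-modules; c) every element of $G$ acting identically on the lowest layer acts identically on all of $M$; 2) if $M$ does not decompose nontrivially into a direct sum of submodules, then every proper submodule of $M$ has exponent smaller than that of $M$. *)

theory Defs
  imports "HOL-Algebra.Group" "HOL-Computational_Algebra.Primes"
begin

definition nsmul :: "nat \<Rightarrow> 'm::ab_group_add \<Rightarrow> 'm" where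
  "nsmul n x = (\<Sum>i<n. x)"

text \<open>A G-module structure on an abelian group (i.e. a module over the group ring Z[G]):
  G acts by additive maps, compatibly with the group law.\<close>
definition is_Gmodule :: "('g,'b) monoid_scheme \<Rightarrow> ('g \<Rightarrow> 'm::ab_group_add \<Rightarrow> 'm) \<Rightarrow> bool" where
  "is_Gmodule G act \<longleftrightarrow>
     (\<forall>g\<in>carrier G. \<forall>x y. act g (x + y) = act g x + act g y) \<and>
     (\<forall>x. act \<one>\<^bsub>G\<^esub> x = x) \<and>
     (\<forall>g\<in>carrier G. \<forall>h\<in>carrier G. \<forall>x. act (g \<otimes>\<^bsub>G\<^esub> h) x = act g (act h x))"

definition submod :: "('g,'b) monoid_scheme \<Rightarrow> ('g \<Rightarrow> 'm::ab_group_add \<Rightarrow> 'm) \<Rightarrow> 'm set \<Rightarrow> bool" where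
  "submod G act N \<longleftrightarrow> 0 \<in> N \<and> (\<forall>x\<in>N. \<forall>y\<in>N. x + y \<in> N) \<and> (\<forall>x\<in>N. - x \<in> N) \<and>
     (\<forall>g\<in>carrier G. \<forall>x\<in>N. act g x \<in> N)"

definition expo :: "'m::ab_group_add set \<Rightarrow> nat" where
  "expo S = (LEAST n. n > 0 \<and> (\<forall>x\<in>S. nsmul n x = 0))"

definition aord :: "'m::ab_group_add \<Rightarrow> nat" where
  "aord x = expo {x}"

text \<open>M is the (internal) direct sum of cyclic subgroups of order q.\<close>
definition homog :: "'m::ab_group_add set \<Rightarrow> nat \<Rightarrow> bool" where
  "homog M q \<longleftrightarrow> (\<exists>xs. set xs \<subseteq> M \<and> (\<forall>x\<in>set xs. aord x = q) \<and>
     (\<forall>y\<in>M. \<exists>!cs. length cs = length xs \<and> (\<forall>c\<in>set cs. c < q) \<and>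
        y = sum_list (map2 nsmul cs xs)))"

definition pM :: "nat \<Rightarrow> nat \<Rightarrow> 'm::ab_group_add set" where
  "pM p i = nsmul (p ^ i) ` UNIV"

definition coset :: "'m::ab_group_add \<Rightarrow> 'm set \<Rightarrow> 'm set" where
  "coset x B = (\<lambda>y. x + y) ` B"

definition quot :: "'m::ab_group_add set \<Rightarrow> 'm set \<Rightarrow> 'm set set" where
  "quot A B = (\<lambda>x. coset x B) ` A"

definition qadd :: "'m::ab_group_add set \<Rightarrow> 'm set \<Rightarrow> 'm set" where
  "qadd X Y = {x + y | x y. x \<in> X \<and> y \<in> Y}"

definition qiso :: "('g,'b) monoid_scheme \<Rightarrow> ('g \<Rightarrow> 'm::ab_group_add \<Rightarrow> 'm) \<Rightarrow>
    'm set \<Rightarrow> 'm set \<Rightarrow> 'm set \<Rightarrow> 'm set \<Rightarrow> bool" where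
  "qiso G act A B C D \<longleftrightarrow> (\<exists>\<phi>. bij_betw \<phi> (quot A B) (quot C D) \<and>
     (\<forall>X\<in>quot A B. \<forall>Y\<in>quot A B. \<phi> (qadd X Y) = qadd (\<phi> X) (\<phi> Y)) \<and>
     (\<forall>g\<in>carrier G. \<forall>X\<in>quot A B. \<phi> (act g ` X) = act g ` \<phi> X))"

definition qsimple :: "('g,'b) monoid_scheme \<Rightarrow> ('g \<Rightarrow> 'm::ab_group_add \<Rightarrow> 'm) \<Rightarrow>
    'm set \<Rightarrow> 'm set \<Rightarrow> bool" where
  "qsimple G act A B \<longleftrightarrow> (\<exists>X\<in>quot A B. X \<noteq> B) \<and>
     (\<forall>S \<subseteq> quot A B. B \<in> S \<and> (\<forall>X\<in>S. \<forall>Y\<in>S. qadd X Y \<in> S) \<and> (\<forall>X\<in>S. uminus ` X \<in> S) \<and>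
        (\<forall>g\<in>carrier G. \<forall>X\<in>S. act g ` X \<in> S) \<longrightarrow> S = {B} \<or> S = quot A B)"

definition decomposable :: "('g,'b) monoid_scheme \<Rightarrow> ('g \<Rightarrow> 'm::ab_group_add \<Rightarrow> 'm) \<Rightarrow> bool" where
  "decomposable G act \<longleftrightarrow> (\<exists>A B. submod G act A \<and> submod G act B \<and> A \<noteq> {0} \<and> B \<noteq> {0} \<and>
     A \<inter> B = {0} \<and> (\<forall>x. \<exists>a\<in>A. \<exists>b\<in>B. x = a + b))"

end

theory Submission
  imports Defs "HOL-Algebra.Multiplicative_Group" "HOL-Library.Set_Algebras"
begin

text \<open>
  Since \<open>p\<close> does not divide \<open>|G|\<close>, averaging over \<open>G\<close> turns a subgroup complement into a
  submodule complement (Maschke), and in a finite abelian \<open>p\<close>-group a pure subgroup has a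
  subgroup complement. Hence a pure submodule is a direct summand.

  Let \<open>p\<^sup>k\<close> be the exponent of \<open>M\<close> and write \<open>M[p\<^sup>k\<^sup>-\<^sup>1]\<close> for the kernel of \<open>p\<^sup>k\<^sup>-\<^sup>1\<close>.
  If every proper submodule is killed by \<open>p\<^sup>k\<^sup>-\<^sup>1\<close>, a complement of \<open>M[p\<^sup>k\<^sup>-\<^sup>1] + pM\<close> modulo
  \<open>pM\<close> cannot be proper, for then \<open>M = M[p\<^sup>k\<^sup>-\<^sup>1] + pM\<close>, and iterating gives \<open>M = M[p\<^sup>k\<^sup>-\<^sup>1]\<close>.
  So \<open>M[p\<^sup>k\<^sup>-\<^sup>1] \<subseteq> pM\<close>, which is all that part 1 needs: multiplication by \<open>p\<^sup>i\<close>
  maps \<open>M/pM\<close> onto the layer \<open>p\<^sup>iM/p\<^sup>i\<^sup>+\<^sup>1M\<close> isomorphically, every layer is simple because a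
  submodule strictly between \<open>p\<^sup>i\<^sup>+\<^sup>1M\<close> and \<open>p\<^sup>iM\<close> would pull back to a proper submodule not
  killed by \<open>p\<^sup>k\<^sup>-\<^sup>1\<close>, a minimal generating set of \<open>M\<close> modulo \<open>pM\<close> is a basis of elements of
  order \<open>p\<^sup>k\<close>, and an element of \<open>G\<close> acting trivially on \<open>p\<^sup>k\<^sup>-\<^sup>1M \<cong> M/pM\<close> acts trivially on
  \<open>M\<close> because its order is prime to \<open>p\<close>.

  For part 2, a minimal proper submodule \<open>W\<close> not killed by \<open>p\<^sup>k\<^sup>-\<^sup>1\<close> satisfies
  \<open>W[p\<^sup>k\<^sup>-\<^sup>1] \<subseteq> pW\<close> by the same argument; this makes \<open>W\<close> pure in \<open>M\<close>, so \<open>W\<close> is a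
  direct summand and \<open>M\<close> decomposes.
\<close>

section \<open>Multiples and exponents\<close>

lemma nsmul_0_left [simp]: "nsmul 0 x = 0"
  by (simp add: nsmul_def)

lemma nsmul_Suc: "nsmul (Suc n) x = x + nsmul n x"
  by (simp add: nsmul_def add.commute)

lemma nsmul_1 [simp]: "nsmul 1 x = x" and nsmul_Suc_0 [simp]: "nsmul (Suc 0) x = x"
  by (simp_all add: nsmul_def)

lemma nsmul_0_right [simp]: "nsmul n 0 = 0"
  by (simp add: nsmul_def)

lemma nsmul_add_left: "nsmul (a + b) x = nsmul a x + nsmul b x"
  by (induction a) (simp_all add: nsmul_Suc add.assoc)

lemma nsmul_add_right: "nsmul n (x + y) = nsmul n x + nsmul n y"
  by (induction n) (simp_all add: nsmul_Suc algebra_simps)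

lemma nsmul_mult: "nsmul (a * b) x = nsmul a (nsmul b x)"
  by (induction a) (simp_all add: nsmul_Suc nsmul_add_left nsmul_add_right)

lemma nsmul_commute: "nsmul a (nsmul b x) = nsmul b (nsmul a x)"
  by (metis nsmul_mult mult.commute)

lemma nsmul_uminus: "nsmul n (- x) = - nsmul n x"
  by (induction n) (simp_all add: nsmul_Suc algebra_simps)

lemma nsmul_diff: "nsmul n (x - y) = nsmul n x - nsmul n y"
  by (metis diff_conv_add_uminus nsmul_add_right nsmul_uminus)

lemma nsmul_sum: "nsmul n (sum f A) = (\<Sum>i\<in>A. nsmul n (f i))"
  by (induction A rule: infinite_finite_induct) (simp_all add: nsmul_add_right)

lemma sum_constant_nsmul: "(\<Sum>_\<in>A. x) = nsmul (card A) x"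
  by (induction A rule: infinite_finite_induct) (simp_all add: nsmul_Suc)

lemma nsmul_mod:
  assumes "nsmul q x = 0"
  shows "nsmul (c mod q) x = nsmul c x"
proof -
  have "nsmul c x = nsmul (c mod q) x + nsmul (c div q) (nsmul q x)"
    by (simp flip: nsmul_mult nsmul_add_left add: mult.commute)
  then show ?thesis
    using assms by simp
qed

lemma nsmul_gcd_eq_0:
  assumes "nsmul a x = 0" "nsmul b x = 0" "a \<noteq> 0"
  shows "nsmul (gcd a b) x = 0"
proof -
  obtain s t where st: "a * s = b * t + gcd a b"
    using bezout_nat[OF assms(3)] by blast
  have "nsmul (a * s) x = nsmul (b * t) x + nsmul (gcd a b) x"
    unfolding st by (rule nsmul_add_left)
  moreover have "nsmul (a * s) x = 0" "nsmul (b * t) x = 0"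
    using assms by (simp_all add: nsmul_mult mult.commute[of a] mult.commute[of b])
  ultimately show ?thesis
    by simp
qed

lemma neg_nsmul:
  assumes "nsmul q x = 0" "q > 0"
  shows "- nsmul n x = nsmul ((q - 1) * n) x"
proof -
  have "(q - 1) * n + n = n * q"
    using assms(2) by (cases q) simp_all
  then have "nsmul ((q - 1) * n) x + nsmul n x = nsmul n (nsmul q x)"
    by (simp flip: nsmul_add_left nsmul_mult)
  then have "nsmul ((q - 1) * n) x = - nsmul n x"
    using assms(1) by (simp add: add_eq_0_iff2)
  then show ?thesis
    by simp
qed

lemma additive_nsmul: "additive f \<Longrightarrow> f (nsmul n x) = nsmul n (f x)"
  by (induction n) (simp_all add: nsmul_Suc additive.zero additive.add)

lemma prime_power_inverse_mod:
  fixes p t :: nat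
  assumes "prime p" "\<not> p dvd t"
  shows "\<exists>s r. s * t = p ^ n * r + 1"
proof -
  have "coprime t (p ^ n)"
    using assms by (simp add: coprime_commute prime_imp_coprime)
  moreover have "t \<noteq> 0"
    using assms(2) by (metis dvd_0_right)
  ultimately obtain s r where "t * s = p ^ n * r + 1"
    using bezout_nat[of t "p ^ n"] by auto
  then show ?thesis
    by (metis mult.commute)
qed

lemma expo_kills:
  assumes "n > 0" "\<forall>x\<in>N. nsmul n x = 0"
  shows "expo N > 0" "\<forall>x\<in>N. nsmul (expo N) x = 0"
  using LeastI[of "\<lambda>n. n > 0 \<and> (\<forall>x\<in>N. nsmul n x = 0)", OF conjI[OF assms]]
  unfolding expo_def by auto

lemma expo_le:
  assumes "n > 0" "\<forall>x\<in>N. nsmul n x = 0"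
  shows "expo N \<le> n"
  unfolding expo_def by (rule Least_le) (use assms in blast)

lemma expo_dvd:
  assumes "n > 0" "\<forall>x\<in>N. nsmul n x = 0"
  shows "expo N dvd n"
proof -
  have "gcd (expo N) n > 0" "\<forall>x\<in>N. nsmul (gcd (expo N) n) x = 0"
    using expo_kills[OF assms] assms by (auto intro: nsmul_gcd_eq_0)
  then have "expo N \<le> gcd (expo N) n"
    by (rule expo_le)
  moreover have "gcd (expo N) n \<le> expo N"
    using expo_kills(1)[OF assms] by (simp add: dvd_imp_le)
  ultimately show ?thesis
    by (metis antisym gcd_dvd2)
qed

lemma expo_prime_power:
  assumes "prime p" "\<forall>x\<in>N. nsmul (p ^ k) x = 0"
  shows "\<exists>i\<le>k. expo N = p ^ i"
  using divides_primepow_nat[OF assms(1)] expo_dvd[OF _ assms(2)] assms(1)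
  by (simp add: prime_gt_0_nat)

lemma expo_less_prime_power_iff:
  assumes "prime p" "k \<ge> 1" "\<forall>x\<in>N. nsmul (p ^ k) x = 0"
  shows "expo N < p ^ k \<longleftrightarrow> (\<forall>x\<in>N. nsmul (p ^ (k - 1)) x = 0)"
proof
  assume "expo N < p ^ k"
  moreover obtain i where "i \<le> k" "expo N = p ^ i"
    using expo_prime_power[OF assms(1,3)] by blast
  ultimately have "i < k"
    using power_less_imp_less_exp prime_gt_1_nat[OF assms(1)] by metis
  then have "p ^ (k - 1) = p ^ (k - 1 - i) * expo N"
    using \<open>expo N = p ^ i\<close> by (simp flip: power_add)
  then show "\<forall>x\<in>N. nsmul (p ^ (k - 1)) x = 0"
    using expo_kills(2)[OF _ assms(3)] assms(1) by (simp add: nsmul_mult prime_gt_0_nat)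
next
  assume "\<forall>x\<in>N. nsmul (p ^ (k - 1)) x = 0"
  then have "expo N \<le> p ^ (k - 1)"
    using assms(1) by (intro expo_le) (simp_all add: prime_gt_0_nat)
  also have "\<dots> < p ^ k"
    using assms(2) prime_gt_1_nat[OF assms(1)] by (intro power_strict_increasing) simp_all
  finally show "expo N < p ^ k" .
qed

lemma expo_UNIV_eq_prime_powerD:
  assumes "prime p" and kill: "\<And>x::'m::ab_group_add. nsmul (p ^ m) x = 0"
    and k: "expo (UNIV::'m set) = p ^ k" and "(x::'m) \<noteq> 0"
  shows "k \<ge> 1" "\<And>y::'m. nsmul (p ^ k) y = 0" "\<exists>y::'m. nsmul (p ^ (k - 1)) y \<noteq> 0"
proof -
  have kill_k: "\<forall>y::'m. nsmul (p ^ k) y = 0"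
    using expo_kills(2)[of "p ^ m" "UNIV::'m set"] kill k assms(1) by (simp add: prime_gt_0_nat)
  then show "\<And>y::'m. nsmul (p ^ k) y = 0"
    by blast
  show "k \<ge> 1"
  proof (rule ccontr)
    assume "\<not> k \<ge> 1"
    then have "k = 0"
      by simp
    then have "nsmul (p ^ k) x = x"
      by simp
    then show False
      using kill_k assms(4) by simp
  qed
  then show "\<exists>y::'m. nsmul (p ^ (k - 1)) y \<noteq> 0"
    using expo_less_prime_power_iff[OF assms(1), of k "UNIV::'m set"] kill_k k by auto
qed

section \<open>Subgroups, cosets and the layers \<open>p\<^sup>i M\<close>\<close>

definition add_subgroup :: "'m::ab_group_add set \<Rightarrow> bool" where
  "add_subgroup A \<longleftrightarrow> 0 \<in> A \<and> (\<forall>x\<in>A. \<forall>y\<in>A. x + y \<in> A) \<and> (\<forall>x\<in>A. - x \<in> A)"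

lemma add_subgroup_0: "add_subgroup A \<Longrightarrow> 0 \<in> A"
  and add_subgroup_add: "add_subgroup A \<Longrightarrow> x \<in> A \<Longrightarrow> y \<in> A \<Longrightarrow> x + y \<in> A"
  and add_subgroup_uminus: "add_subgroup A \<Longrightarrow> x \<in> A \<Longrightarrow> - x \<in> A"
  by (simp_all add: add_subgroup_def)

lemma add_subgroup_diff: "add_subgroup A \<Longrightarrow> x \<in> A \<Longrightarrow> y \<in> A \<Longrightarrow> x - y \<in> A"
  by (metis diff_conv_add_uminus add_subgroup_add add_subgroup_uminus)

lemma add_subgroup_nsmul: "add_subgroup A \<Longrightarrow> x \<in> A \<Longrightarrow> nsmul n x \<in> A"
  by (induction n) (simp_all add: nsmul_Suc add_subgroup_0 add_subgroup_add)

lemma add_subgroup_sum: "add_subgroup A \<Longrightarrow> (\<And>i. i \<in> I \<Longrightarrow> f i \<in> A) \<Longrightarrow> sum f I \<in> A"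
  by (induction I rule: infinite_finite_induct) (simp_all add: add_subgroup_0 add_subgroup_add)

lemma submod_add_subgroup: "submod G act N \<Longrightarrow> add_subgroup N"
  by (simp add: submod_def add_subgroup_def)

lemma submod_act: "submod G act N \<Longrightarrow> g \<in> carrier G \<Longrightarrow> x \<in> N \<Longrightarrow> act g x \<in> N"
  by (simp add: submod_def)

lemma set_plus_subset: "add_subgroup W \<Longrightarrow> A \<subseteq> W \<Longrightarrow> B \<subseteq> W \<Longrightarrow> A + B \<subseteq> W"
  by (auto elim!: set_plus_elim intro: add_subgroup_add)

lemma mem_coset_iff [simp]: "z \<in> coset x B \<longleftrightarrow> z - x \<in> B"
  unfolding coset_def image_iff
proof
  assume "z - x \<in> B"
  then show "\<exists>y\<in>B. z = x + y"
    by (intro bexI[of _ "z - x"]) simp_all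
qed auto

lemma coset_0 [simp]: "coset 0 B = B"
  unfolding coset_def by simp

lemma coset_eq_iff:
  assumes "add_subgroup B"
  shows "coset x B = coset y B \<longleftrightarrow> x - y \<in> B"
proof
  assume "coset x B = coset y B"
  moreover have "x \<in> coset x B"
    using add_subgroup_0[OF assms] by simp
  ultimately show "x - y \<in> B"
    by simp
next
  assume xy: "x - y \<in> B"
  have "z - x \<in> B \<longleftrightarrow> z - y \<in> B" for z
  proof
    assume "z - x \<in> B"
    then have "(z - x) + (x - y) \<in> B"
      using add_subgroup_add[OF assms _ xy] by blast
    then show "z - y \<in> B"
      by simp
  next
    assume "z - y \<in> B"
    then have "(z - y) - (x - y) \<in> B"
      using add_subgroup_diff[OF assms _ xy] by blast
    then show "z - x \<in> B"
      by simp
  qed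
  then show "coset x B = coset y B"
    unfolding set_eq_iff mem_coset_iff by blast
qed

lemma qadd_coset:
  assumes "add_subgroup B"
  shows "qadd (coset a B) (coset b B) = coset (a + b) B"
proof (intro Set.set_eqI iffI)
  fix z assume "z \<in> qadd (coset a B) (coset b B)"
  then obtain x y where "x - a \<in> B" "y - b \<in> B" "z = x + y"
    unfolding qadd_def by auto
  then have "z - (a + b) = (x - a) + (y - b)"
    by simp
  then have "z - (a + b) \<in> B"
    using add_subgroup_add[OF assms \<open>x - a \<in> B\<close> \<open>y - b \<in> B\<close>] by (simp only:)
  then show "z \<in> coset (a + b) B"
    by simp
next
  fix z assume "z \<in> coset (a + b) B"
  then have "z - b \<in> coset a B" "b \<in> coset b B"
    using add_subgroup_0[OF assms] by (simp_all add: algebra_simps)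
  then show "z \<in> qadd (coset a B) (coset b B)"
    unfolding qadd_def by (intro CollectI exI[of _ "z - b"] exI[of _ b]) simp
qed

lemma additive_image_coset: "additive f \<Longrightarrow> f ` coset a B = coset (f a) (f ` B)"
  unfolding coset_def image_image by (simp add: additive.add image_image)

lemma mem_quot_iff: "X \<in> quot A B \<longleftrightarrow> (\<exists>a\<in>A. X = coset a B)"
  unfolding quot_def by blast

lemma Union_quot_subset:
  assumes "add_subgroup A" "B \<subseteq> A" "S \<subseteq> quot A B"
  shows "\<Union>S \<subseteq> A"
proof
  fix t assume "t \<in> \<Union>S"
  then obtain X where "X \<in> quot A B" "t \<in> X"
    using assms(3) by blast
  then obtain a where "a \<in> A" "t - a \<in> B"
    unfolding mem_quot_iff by auto
  then have "(t - a) + a \<in> A"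
    using assms(1,2) add_subgroup_add by blast
  then show "t \<in> A"
    by simp
qed

lemma Union_quot_eq_bottom:
  assumes "add_subgroup B" "S \<subseteq> quot A B" "\<Union>S = B"
  shows "S \<subseteq> {B}"
proof
  fix X assume "X \<in> S"
  then have "X \<in> quot A B"
    using assms(2) by blast
  then obtain a where X: "X = coset a B"
    unfolding mem_quot_iff by blast
  then have "a \<in> B"
    using \<open>X \<in> S\<close> assms(3) add_subgroup_0[OF assms(1)] by auto
  then show "X \<in> {B}"
    using X coset_eq_iff[OF assms(1), of a 0] by simp
qed

lemma Union_quot_eq_top:
  assumes "add_subgroup B" "S \<subseteq> quot A B" "\<Union>S = A"
  shows "quot A B \<subseteq> S"
proof
  fix X assume "X \<in> quot A B"
  then obtain a where "a \<in> A" and X: "X = coset a B"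
    unfolding mem_quot_iff by blast
  then obtain Y where "Y \<in> S" "a \<in> Y"
    using assms(3) by blast
  moreover obtain b where "Y = coset b B"
    using \<open>Y \<in> S\<close> assms(2) unfolding quot_def by blast
  ultimately have "X = Y"
    using X coset_eq_iff[OF assms(1)] by simp
  then show "X \<in> S"
    using \<open>Y \<in> S\<close> by simp
qed

lemma mem_pM_iff: "x \<in> pM p i \<longleftrightarrow> (\<exists>z. x = nsmul (p ^ i) z)"
  unfolding pM_def by auto

lemma pM_antimono:
  assumes "i \<le> j"
  shows "pM p j \<subseteq> pM p i"
proof
  fix x assume "x \<in> pM p j"
  then obtain z where "x = nsmul (p ^ j) z"
    unfolding mem_pM_iff by blast
  then have "x = nsmul (p ^ i) (nsmul (p ^ (j - i)) z)"
    using assms by (simp flip: nsmul_mult power_add)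
  then show "x \<in> pM p i"
    unfolding mem_pM_iff by blast
qed

lemma quot_pM_eq: "quot (pM p i) B = range (\<lambda>y. coset (nsmul (p ^ i) y) B)"
  by (simp add: quot_def pM_def image_image)

lemma quot_pM_iff: "X \<in> quot (pM p i) B \<longleftrightarrow> (\<exists>y. X = coset (nsmul (p ^ i) y) B)"
  unfolding quot_def pM_def image_image by (simp add: image_iff)

lemma nakayama_nsmul:
  assumes A: "add_subgroup A" and W: "W \<subseteq> A + nsmul p ` W"
    and kill: "\<forall>x\<in>W. nsmul (p ^ k) x = 0"
  shows "W \<subseteq> A"
proof -
  have multiples: "W \<subseteq> A + nsmul (p ^ j) ` W" for j
  proof (induction j)
    case 0
    show ?case
    proof
      fix y assume "y \<in> W"
      then have "0 + nsmul (p ^ 0) y \<in> A + nsmul (p ^ 0) ` W"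
        by (intro set_plus_intro add_subgroup_0[OF A] imageI)
      then show "y \<in> A + nsmul (p ^ 0) ` W"
        by simp
    qed
  next
    case (Suc j)
    show ?case
    proof
      fix y assume "y \<in> W"
      then obtain a b where "a \<in> A" "b \<in> nsmul (p ^ j) ` W" "y = a + b"
        using Suc.IH by (blast elim: set_plus_elim)
      then obtain z where "z \<in> W" "y = a + nsmul (p ^ j) z"
        by blast
      moreover obtain a' b' where "a' \<in> A" "b' \<in> nsmul p ` W" "z = a' + b'"
        using W \<open>z \<in> W\<close> by (blast elim: set_plus_elim)
      moreover obtain z' where "z' \<in> W" "b' = nsmul p z'"
        using \<open>b' \<in> nsmul p ` W\<close> by blast
      moreover have "nsmul (p ^ j) (nsmul p z') = nsmul (p ^ Suc j) z'"
        by (simp add: mult.commute flip: nsmul_mult)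
      ultimately have "y = (a + nsmul (p ^ j) a') + nsmul (p ^ Suc j) z'"
        by (simp add: nsmul_add_right add.assoc)
      moreover have "a + nsmul (p ^ j) a' \<in> A"
        using A \<open>a \<in> A\<close> \<open>a' \<in> A\<close> by (simp add: add_subgroup_add add_subgroup_nsmul)
      ultimately show "y \<in> A + nsmul (p ^ Suc j) ` W"
        using \<open>z' \<in> W\<close> by (simp add: set_plus_intro)
    qed
  qed
  show ?thesis
  proof
    fix y assume "y \<in> W"
    then obtain a b where "a \<in> A" "b \<in> nsmul (p ^ k) ` W" "y = a + b"
      using multiples[of k] by (blast elim: set_plus_elim)
    then show "y \<in> A"
      using kill by auto
  qed
qed

section \<open>Complements modulo a subgroup\<close>

text \<open>\<open>C / L\<close> is a complement of \<open>K / L\<close> in \<open>W / L\<close>.\<close>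

definition rel_complement :: "'m::ab_group_add set \<Rightarrow> 'm set \<Rightarrow> 'm set \<Rightarrow> 'm set \<Rightarrow> bool" where
  "rel_complement W K L C \<longleftrightarrow> C \<subseteq> W \<and> L \<subseteq> C \<and> C \<inter> K \<subseteq> L \<and> W \<subseteq> C + K"

lemma last_p_power_outside:
  assumes "x \<notin> S" "nsmul (p ^ n) x \<in> S"
  shows "\<exists>i. nsmul (p ^ i) x \<notin> S \<and> nsmul p (nsmul (p ^ i) x) \<in> S"
  using assms(2)
proof (induction n)
  case 0
  then show ?case
    using assms(1) by simp
next
  case (Suc n)
  then show ?case
    by (cases "nsmul (p ^ n) x \<in> S") (auto simp flip: nsmul_mult)
qed

lemma add_subgroup_adjoin:
  assumes "add_subgroup C" "nsmul p y \<in> C" "p > 0"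
  shows "add_subgroup {c + nsmul t y | c t. c \<in> C}"
  unfolding add_subgroup_def
proof (intro conjI ballI)
  show "0 \<in> {c + nsmul t y | c t. c \<in> C}"
    using add_subgroup_0[OF assms(1)] by (intro CollectI exI[of _ 0]) simp
next
  fix a b assume "a \<in> {c + nsmul t y | c t. c \<in> C}" "b \<in> {c + nsmul t y | c t. c \<in> C}"
  then obtain c t c' t' where "c \<in> C" "c' \<in> C" "a = c + nsmul t y" "b = c' + nsmul t' y"
    by blast
  then have "a + b = (c + c') + nsmul (t + t') y" "c + c' \<in> C"
    using add_subgroup_add[OF assms(1)] by (simp_all add: nsmul_add_left algebra_simps)
  then show "a + b \<in> {c + nsmul t y | c t. c \<in> C}"
    by (intro CollectI exI[of _ "c + c'"] exI[of _ "t + t'"]) simp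
next
  fix a assume "a \<in> {c + nsmul t y | c t. c \<in> C}"
  then obtain c t where c: "c \<in> C" and a: "a = c + nsmul t y"
    by blast
  have "(p - 1) * t + t = t * p"
    using assms(3) by (cases p) simp_all
  then have multiple: "nsmul ((p - 1) * t) y + nsmul t y = nsmul t (nsmul p y)"
    by (simp flip: nsmul_add_left nsmul_mult)
  have "- (c + v) = (- c - (u + v)) + u" for u v :: 'a
    by (simp add: algebra_simps)
  then have "- a = (- c - nsmul t (nsmul p y)) + nsmul ((p - 1) * t) y"
    unfolding a multiple[symmetric] .
  moreover have "- c - nsmul t (nsmul p y) \<in> C"
    using c assms(1,2) by (simp add: add_subgroup_diff add_subgroup_uminus add_subgroup_nsmul)
  ultimately show "- a \<in> {c + nsmul t y | c t. c \<in> C}"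
    by (intro CollectI exI[of _ "- c - nsmul t (nsmul p y)"] exI[of _ "(p - 1) * t"]) simp
qed

text \<open>Adjoining to \<open>C\<close> an element \<open>y \<notin> C + K\<close> with \<open>p y \<in> C\<close> keeps \<open>C \<inter> K \<subseteq> L\<close>:
  a multiple \<open>t y\<close> with \<open>p \<nmid> t\<close> would put \<open>y\<close> itself into \<open>C + K\<close>.\<close>

lemma adjoin_inter_subset:
  assumes "prime p" "add_subgroup C" "add_subgroup K" "C \<inter> K \<subseteq> L"
    and "nsmul p y \<in> C" "y \<notin> C + K"
  shows "{c + nsmul t y | c t. c \<in> C} \<inter> K \<subseteq> L"
proof
  fix z assume "z \<in> {c + nsmul t y | c t. c \<in> C} \<inter> K"
  then obtain c t where c: "c \<in> C" and z: "z = c + nsmul t y" "z \<in> K"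
    by blast
  show "z \<in> L"
  proof (cases "p dvd t")
    case True
    then obtain t' where "t = t' * p"
      by (metis dvdE mult.commute)
    then have "nsmul t y \<in> C"
      using add_subgroup_nsmul[OF assms(2,5)] by (simp add: nsmul_mult)
    then show ?thesis
      using z c assms(2,4) add_subgroup_add by blast
  next
    case False
    then obtain s r where sr: "s * t = p * r + 1"
      using prime_power_inverse_mod[OF assms(1), of t 1] by auto
    have "nsmul (s * t) y = nsmul r (nsmul p y) + y"
      unfolding sr by (simp only: nsmul_add_left nsmul_1 nsmul_mult nsmul_commute[of p r])
    then have "nsmul s z = nsmul s c + (nsmul r (nsmul p y) + y)"
      by (simp add: z nsmul_add_right flip: nsmul_mult)
    moreover have "w = u + (v + y) \<Longrightarrow> y = - (u + v) + w" for u v w :: 'a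
      by (simp add: algebra_simps)
    ultimately have "y = - (nsmul s c + nsmul r (nsmul p y)) + nsmul s z"
      by blast
    moreover have "- (nsmul s c + nsmul r (nsmul p y)) \<in> C"
    proof -
      have "nsmul s c \<in> C" "nsmul r (nsmul p y) \<in> C"
        using c assms(5) add_subgroup_nsmul[OF assms(2)] by blast+
      then show ?thesis
        by (intro add_subgroup_uminus[OF assms(2)] add_subgroup_add[OF assms(2)])
    qed
    moreover have "nsmul s z \<in> K"
      using add_subgroup_nsmul[OF assms(3) z(2)] .
    ultimately have "y \<in> C + K"
      using set_plus_intro by fastforce
    then show ?thesis
      using assms(6) by blast
  qed
qed

text \<open>Replace \<open>y\<^sub>0\<close> by its last \<open>p\<close>-power multiple \<open>y\<close> outside \<open>C + K\<close>; purity corrects \<open>y\<close> by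
  an element of \<open>K\<close> so that \<open>p y \<in> C\<close>, and then \<open>y\<close> can be adjoined to \<open>C\<close>.\<close>

lemma partial_complement_grows:
  assumes "prime p" and kill: "nsmul (p ^ m) y0 = 0"
    and W: "add_subgroup W" and K: "add_subgroup K" and "K \<subseteq> W"
    and C: "add_subgroup C" "C \<subseteq> W" "C \<inter> K \<subseteq> L"
    and pure: "\<And>y. y \<in> W \<Longrightarrow> nsmul p y \<in> C + K \<Longrightarrow> \<exists>f\<in>K. nsmul p (y - f) \<in> C"
    and "y0 \<in> W" "y0 \<notin> C + K"
  shows "\<exists>D. add_subgroup D \<and> D \<subseteq> W \<and> C \<subset> D \<and> D \<inter> K \<subseteq> L"
proof -
  have "nsmul (p ^ m) y0 \<in> C + K"
    using set_plus_intro[OF add_subgroup_0[OF C(1)] add_subgroup_0[OF K]] by (simp add: kill)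
  then obtain i where y_out: "nsmul (p ^ i) y0 \<notin> C + K"
    and y_in: "nsmul p (nsmul (p ^ i) y0) \<in> C + K"
    using last_p_power_outside \<open>y0 \<notin> C + K\<close> by blast
  obtain f where "f \<in> K" and pf: "nsmul p (nsmul (p ^ i) y0 - f) \<in> C"
    using pure[OF _ y_in] add_subgroup_nsmul[OF W \<open>y0 \<in> W\<close>] by blast
  define y where "y = nsmul (p ^ i) y0 - f"
  have "y \<in> W"
    unfolding y_def using \<open>f \<in> K\<close> \<open>K \<subseteq> W\<close>
    by (intro add_subgroup_diff[OF W] add_subgroup_nsmul[OF W \<open>y0 \<in> W\<close>]) blast
  have "y \<notin> C + K"
  proof
    assume "y \<in> C + K"
    then obtain c k where "c \<in> C" "k \<in> K" "y = c + k"
      by (blast elim: set_plus_elim)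
    then have "nsmul (p ^ i) y0 = c + (k + f)"
      unfolding y_def by (simp add: algebra_simps)
    moreover have "k + f \<in> K"
      using add_subgroup_add[OF K \<open>k \<in> K\<close> \<open>f \<in> K\<close>] .
    ultimately show False
      using y_out set_plus_intro[OF \<open>c \<in> C\<close>, of "k + f" K] by simp
  qed
  define D where "D = {c + nsmul t y | c t. c \<in> C}"
  have "add_subgroup D"
    unfolding D_def using add_subgroup_adjoin[OF C(1) pf[folded y_def]] assms(1) prime_gt_0_nat by blast
  moreover have "D \<subseteq> W"
  proof
    fix z assume "z \<in> D"
    then obtain c t where "c \<in> C" "z = c + nsmul t y"
      unfolding D_def by blast
    then show "z \<in> W"
      using C(2) add_subgroup_add[OF W] add_subgroup_nsmul[OF W \<open>y \<in> W\<close>] by blast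
  qed
  moreover have "D \<inter> K \<subseteq> L"
    unfolding D_def by (rule adjoin_inter_subset[OF assms(1) C(1) K C(3) pf[folded y_def] \<open>y \<notin> C + K\<close>])
  moreover have "C \<subseteq> D"
  proof
    fix c assume "c \<in> C"
    then show "c \<in> D"
      unfolding D_def by (intro CollectI exI[of _ c] exI[of _ "0::nat"]) simp
  qed
  moreover have "y \<in> D"
    unfolding D_def using add_subgroup_0[OF C(1)] by (intro CollectI exI[of _ 0] exI[of _ "1::nat"]) simp
  moreover have "y \<notin> C"
    using \<open>y \<notin> C + K\<close> set_plus_intro[OF _ add_subgroup_0[OF K], of y C] by auto
  ultimately show ?thesis
    by blast
qed

text \<open>Hypothesis \<open>pure\<close> says that \<open>K\<close> is pure in \<open>W\<close> modulo every partial complement \<open>C\<close>.\<close>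

lemma rel_complement_subgroup_exists:
  fixes W K L :: "'m::{ab_group_add,finite} set"
  assumes "prime p" and kill: "\<And>x::'m. nsmul (p ^ m) x = 0"
    and W: "add_subgroup W" and K: "add_subgroup K" and L: "add_subgroup L"
    and "L \<subseteq> K" "K \<subseteq> W"
    and pure: "\<And>C y. add_subgroup C \<Longrightarrow> C \<subseteq> W \<Longrightarrow> L \<subseteq> C \<Longrightarrow> C \<inter> K \<subseteq> L \<Longrightarrow> y \<in> W \<Longrightarrow>
      nsmul p y \<in> C + K \<Longrightarrow> \<exists>f\<in>K. nsmul p (y - f) \<in> C"
  shows "\<exists>C. add_subgroup C \<and> rel_complement W K L C"
proof -
  define CC where "CC = {C. add_subgroup C \<and> C \<subseteq> W \<and> L \<subseteq> C \<and> C \<inter> K \<subseteq> L}"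
  have "L \<in> CC"
    using L assms(6,7) unfolding CC_def by blast
  then have "\<exists>C\<in>CC. \<forall>D\<in>CC. C \<subseteq> D \<longrightarrow> C = D"
    by (intro finite_has_maximal) auto
  then obtain C where "C \<in> CC" and C_max: "\<And>D. D \<in> CC \<Longrightarrow> C \<subseteq> D \<Longrightarrow> C = D"
    by blast
  then have C: "add_subgroup C" "C \<subseteq> W" "L \<subseteq> C" "C \<inter> K \<subseteq> L"
    unfolding CC_def by auto
  have "W \<subseteq> C + K"
  proof
    fix y0 assume "y0 \<in> W"
    show "y0 \<in> C + K"
    proof (rule ccontr)
      assume "y0 \<notin> C + K"
      then obtain D where "add_subgroup D" "D \<subseteq> W" "C \<subset> D" "D \<inter> K \<subseteq> L"
        using partial_complement_grows[OF assms(1) kill W K assms(7) C(1,2,4) pure[OF C] \<open>y0 \<in> W\<close>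
          \<open>y0 \<notin> C + K\<close>]
        by blast
      then have "D \<in> CC"
        using C(3) unfolding CC_def by blast
      then show False
        using C_max \<open>C \<subset> D\<close> by blast
    qed
  qed
  then show ?thesis
    using C unfolding rel_complement_def by blast
qed

text \<open>\<open>\<pi>\<close> induces a projection of \<open>W / L\<close> onto \<open>K / L\<close>.\<close>

definition proj_mod :: "'m::ab_group_add set \<Rightarrow> 'm set \<Rightarrow> 'm set \<Rightarrow> ('m \<Rightarrow> 'm) \<Rightarrow> bool" where
  "proj_mod W K L \<pi> \<longleftrightarrow> (\<forall>y\<in>W. \<pi> y \<in> K) \<and> (\<forall>a\<in>W. \<forall>b\<in>W. \<pi> (a + b) - \<pi> a - \<pi> b \<in> L) \<and>
     (\<forall>k\<in>K. \<pi> k - k \<in> L)"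

lemma proj_mod_of_rel_complement:
  assumes W: "add_subgroup W" and K: "add_subgroup K" and L: "add_subgroup L"
    and C: "add_subgroup C" and "K \<subseteq> W" and WKLC: "rel_complement W K L C"
  shows "\<exists>\<pi>. proj_mod W K L \<pi>"
proof -
  define \<pi> where "\<pi> y = (SOME k. k \<in> K \<and> y - k \<in> C)" for y
  have \<pi>: "\<pi> y \<in> K \<and> y - \<pi> y \<in> C" if "y \<in> W" for y
  proof -
    have "y \<in> C + K"
      using that WKLC unfolding rel_complement_def by blast
    then obtain c k where "c \<in> C" "k \<in> K" "y = c + k"
      by (blast elim: set_plus_elim)
    then have "\<exists>k. k \<in> K \<and> y - k \<in> C"
      by force
    then show ?thesis
      unfolding \<pi>_def by (rule someI_ex)
  qed
  have in_L: "x \<in> L" if "x \<in> K" "- x \<in> C" for x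
    using that add_subgroup_uminus[OF C] WKLC unfolding rel_complement_def by fastforce
  have "\<pi> (a + b) - \<pi> a - \<pi> b \<in> L" if "a \<in> W" "b \<in> W" for a b
  proof (rule in_L)
    have "a + b \<in> W"
      using add_subgroup_add[OF W that] .
    then show "\<pi> (a + b) - \<pi> a - \<pi> b \<in> K"
      using \<pi> that add_subgroup_diff[OF K] by blast
    have "(a + b - \<pi> (a + b)) - (a - \<pi> a) - (b - \<pi> b) \<in> C"
      using \<pi> that \<open>a + b \<in> W\<close> add_subgroup_diff[OF C] by blast
    then show "- (\<pi> (a + b) - \<pi> a - \<pi> b) \<in> C"
      by (simp add: algebra_simps)
  qed
  moreover have "\<pi> k - k \<in> L" if "k \<in> K" for k
  proof (rule in_L)
    show "\<pi> k - k \<in> K"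
      using \<pi> that \<open>K \<subseteq> W\<close> add_subgroup_diff[OF K] by blast
    show "- (\<pi> k - k) \<in> C"
      using \<pi> that \<open>K \<subseteq> W\<close> by auto
  qed
  ultimately have "proj_mod W K L \<pi>"
    using \<pi> unfolding proj_mod_def by (intro conjI ballI) simp_all
  then show ?thesis
    by blast
qed

lemma proj_modD:
  assumes "proj_mod W K L \<pi>"
  shows "y \<in> W \<Longrightarrow> \<pi> y \<in> K" "a \<in> W \<Longrightarrow> b \<in> W \<Longrightarrow> \<pi> (a + b) - \<pi> a - \<pi> b \<in> L"
    "k \<in> K \<Longrightarrow> \<pi> k - k \<in> L"
  using assms unfolding proj_mod_def by blast+

lemma proj_mod_add_mem_iff:
  assumes \<pi>: "proj_mod W K L \<pi>" and L: "add_subgroup L" and "a \<in> W" "b \<in> W"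
  shows "\<pi> (a + b) \<in> L \<longleftrightarrow> \<pi> a + \<pi> b \<in> L"
proof
  assume "\<pi> (a + b) \<in> L"
  then have "\<pi> (a + b) - (\<pi> (a + b) - \<pi> a - \<pi> b) \<in> L"
    using add_subgroup_diff[OF L _ proj_modD(2)[OF \<pi> assms(3,4)]] by blast
  then show "\<pi> a + \<pi> b \<in> L"
    by (simp add: add.commute)
next
  assume "\<pi> a + \<pi> b \<in> L"
  then have "(\<pi> (a + b) - \<pi> a - \<pi> b) + (\<pi> a + \<pi> b) \<in> L"
    using add_subgroup_add[OF L proj_modD(2)[OF \<pi> assms(3,4)]] by blast
  then show "\<pi> (a + b) \<in> L"
    by simp
qed

lemma add_subgroup_proj_mod_kernel:
  assumes W: "add_subgroup W" and L: "add_subgroup L" and \<pi>: "proj_mod W K L \<pi>"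
  shows "add_subgroup {y \<in> W. \<pi> y \<in> L}"
  unfolding add_subgroup_def
proof (intro conjI ballI)
  have "\<pi> (0 + 0) - \<pi> 0 - \<pi> 0 \<in> L"
    using proj_modD(2)[OF \<pi>] add_subgroup_0[OF W] by blast
  then have "- (- \<pi> 0) \<in> L"
    using add_subgroup_uminus[OF L] by force
  then show "0 \<in> {y \<in> W. \<pi> y \<in> L}"
    using add_subgroup_0[OF W] by simp
  then have \<pi>0: "\<pi> 0 \<in> L"
    by blast
  show "x + y \<in> {y \<in> W. \<pi> y \<in> L}" if "x \<in> {y \<in> W. \<pi> y \<in> L}" "y \<in> {y \<in> W. \<pi> y \<in> L}" for x y
    using that proj_mod_add_mem_iff[OF \<pi> L] add_subgroup_add[OF W] add_subgroup_add[OF L] by auto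
  show "- x \<in> {y \<in> W. \<pi> y \<in> L}" if x: "x \<in> {y \<in> W. \<pi> y \<in> L}" for x
  proof -
    have "- x \<in> W" "\<pi> (x + - x) \<in> L"
      using x \<pi>0 add_subgroup_uminus[OF W] by auto
    then have "\<pi> x + \<pi> (- x) \<in> L"
      using proj_mod_add_mem_iff[OF \<pi> L] x by blast
    then have "(\<pi> x + \<pi> (- x)) - \<pi> x \<in> L"
      using x add_subgroup_diff[OF L] by blast
    then show ?thesis
      using \<open>- x \<in> W\<close> by simp
  qed
qed

lemma rel_complement_proj_mod_kernel:
  assumes W: "add_subgroup W" and L: "add_subgroup L" and "L \<subseteq> K" "K \<subseteq> W"
    and \<pi>: "proj_mod W K L \<pi>"
  shows "rel_complement W K L {y \<in> W. \<pi> y \<in> L}"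
proof -
  let ?C = "{y \<in> W. \<pi> y \<in> L}"
  have "L \<subseteq> ?C"
  proof
    fix l assume "l \<in> L"
    then have "(\<pi> l - l) + l \<in> L"
      using proj_modD(3)[OF \<pi>] \<open>L \<subseteq> K\<close> add_subgroup_add[OF L] by blast
    then show "l \<in> ?C"
      using \<open>l \<in> L\<close> \<open>L \<subseteq> K\<close> \<open>K \<subseteq> W\<close> by auto
  qed
  moreover have "?C \<inter> K \<subseteq> L"
  proof
    fix k assume "k \<in> ?C \<inter> K"
    then have "\<pi> k - (\<pi> k - k) \<in> L"
      using proj_modD(3)[OF \<pi>] add_subgroup_diff[OF L] by blast
    then show "k \<in> L"
      by simp
  qed
  moreover have "W \<subseteq> ?C + K"
  proof
    fix y assume y: "y \<in> W"
    have "\<pi> y \<in> K" "\<pi> y \<in> W"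
      using proj_modD(1)[OF \<pi> y] \<open>K \<subseteq> W\<close> by auto
    have "y - \<pi> y \<in> W"
      using add_subgroup_diff[OF W y \<open>\<pi> y \<in> W\<close>] .
    have "\<pi> y - \<pi> (y - \<pi> y) - \<pi> (\<pi> y) \<in> L"
      using proj_modD(2)[OF \<pi> \<open>y - \<pi> y \<in> W\<close> \<open>\<pi> y \<in> W\<close>] by simp
    then have "(\<pi> y - \<pi> (y - \<pi> y) - \<pi> (\<pi> y)) + (\<pi> (\<pi> y) - \<pi> y) \<in> L"
      by (rule add_subgroup_add[OF L _ proj_modD(3)[OF \<pi> \<open>\<pi> y \<in> K\<close>]])
    then have "- \<pi> (y - \<pi> y) \<in> L"
      by (simp add: algebra_simps)
    then have "- (- \<pi> (y - \<pi> y)) \<in> L"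
      by (rule add_subgroup_uminus[OF L])
    then have "y - \<pi> y \<in> ?C"
      using \<open>y - \<pi> y \<in> W\<close> by simp
    then have "(y - \<pi> y) + \<pi> y \<in> ?C + K"
      using \<open>\<pi> y \<in> K\<close> by (rule set_plus_intro)
    then show "y \<in> ?C + K"
      by simp
  qed
  ultimately show ?thesis
    unfolding rel_complement_def by blast
qed

section \<open>\<open>G\<close>-modules and averaging\<close>

locale Gmodule = group G for G :: "('g, 'b) monoid_scheme" (structure) +
  fixes act :: "'g \<Rightarrow> 'm::ab_group_add \<Rightarrow> 'm"
  assumes Gmodule: "is_Gmodule G act"
begin

lemma act_additive: "g \<in> carrier G \<Longrightarrow> additive (act g)"
  using Gmodule by (simp add: is_Gmodule_def additive_def)

lemma act_one [simp]: "act \<one> x = x"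
  using Gmodule by (simp add: is_Gmodule_def)

lemma act_mult: "g \<in> carrier G \<Longrightarrow> h \<in> carrier G \<Longrightarrow> act (g \<otimes> h) x = act g (act h x)"
  using Gmodule by (simp add: is_Gmodule_def)

lemma act_inv_act [simp]: "g \<in> carrier G \<Longrightarrow> act (inv g) (act g x) = x"
  by (metis act_mult act_one inv_closed l_inv)

lemma act_act_inv [simp]: "g \<in> carrier G \<Longrightarrow> act g (act (inv g) x) = x"
  by (metis act_mult act_one inv_closed r_inv)

lemma act_diff: "g \<in> carrier G \<Longrightarrow> act g (x - y) = act g x - act g y"
  by (simp add: act_additive additive.diff)

lemma act_nsmul: "g \<in> carrier G \<Longrightarrow> act g (nsmul n x) = nsmul n (act g x)"
  by (simp add: act_additive additive_nsmul)

lemma act_sum: "g \<in> carrier G \<Longrightarrow> act g (sum f A) = (\<Sum>i\<in>A. act g (f i))"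
  by (simp add: act_additive additive.sum)

lemma act_image_submod: "submod G act N \<Longrightarrow> g \<in> carrier G \<Longrightarrow> act g ` N = N"
  using submod_act[of G act N "inv g"] by (force intro: submod_act)

lemma submod_UNIV: "submod G act UNIV"
  by (simp add: submod_def)

lemma submod_zero: "submod G act {0}"
  by (simp add: submod_def act_additive additive.zero)

lemma submod_set_plus:
  assumes A: "submod G act A" and B: "submod G act B"
  shows "submod G act (A + B)"
  unfolding submod_def
proof (intro conjI ballI)
  have sgA: "add_subgroup A" and sgB: "add_subgroup B"
    using A B by (simp_all add: submod_add_subgroup)
  show "0 \<in> A + B"
    using set_plus_intro[OF add_subgroup_0[OF sgA] add_subgroup_0[OF sgB]] by simp
  show "x + y \<in> A + B" if x: "x \<in> A + B" and y: "y \<in> A + B" for x y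
  proof -
    obtain a b where "a \<in> A" "b \<in> B" "x = a + b"
      using x by (blast elim: set_plus_elim)
    moreover obtain a' b' where "a' \<in> A" "b' \<in> B" "y = a' + b'"
      using y by (blast elim: set_plus_elim)
    ultimately have "x + y = (a + a') + (b + b')" "a + a' \<in> A" "b + b' \<in> B"
      using add_subgroup_add[OF sgA] add_subgroup_add[OF sgB] by (simp_all add: algebra_simps)
    then show ?thesis
      by (simp add: set_plus_intro)
  qed
  show "- x \<in> A + B" if x: "x \<in> A + B" for x
  proof -
    obtain a b where "a \<in> A" "b \<in> B" "x = a + b"
      using x by (blast elim: set_plus_elim)
    then have "- x = - a + - b" "- a \<in> A" "- b \<in> B"
      using add_subgroup_uminus[OF sgA] add_subgroup_uminus[OF sgB] by simp_all
    then show ?thesis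
      by (metis set_plus_intro)
  qed
  show "act g x \<in> A + B" if g: "g \<in> carrier G" and x: "x \<in> A + B" for g x
  proof -
    obtain a b where "a \<in> A" "b \<in> B" "x = a + b"
      using x by (blast elim: set_plus_elim)
    then have "act g x = act g a + act g b" "act g a \<in> A" "act g b \<in> B"
      using g submod_act[OF A] submod_act[OF B] by (simp_all add: act_additive additive.add)
    then show ?thesis
      by (simp add: set_plus_intro)
  qed
qed

lemma submod_image_nsmul:
  assumes "submod G act A"
  shows "submod G act (nsmul n ` A)"
  unfolding submod_def
proof (intro conjI ballI)
  have "0 \<in> A"
    using assms by (simp add: submod_def)
  then show "0 \<in> nsmul n ` A"
    by (intro image_eqI[where x = 0]) simp_all
  show "x + y \<in> nsmul n ` A" if "x \<in> nsmul n ` A" "y \<in> nsmul n ` A" for x y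
    using that assms by (auto simp: submod_def simp flip: nsmul_add_right)
  show "- x \<in> nsmul n ` A" if "x \<in> nsmul n ` A" for x
    using that assms by (auto simp: submod_def simp flip: nsmul_uminus)
  show "act g x \<in> nsmul n ` A" if "g \<in> carrier G" "x \<in> nsmul n ` A" for g x
    using that assms by (auto simp: submod_def act_nsmul)
qed

lemma submod_kernel_nsmul: "submod G act A \<Longrightarrow> submod G act {y \<in> A. nsmul n y = 0}"
  unfolding submod_def
  by (auto simp: nsmul_add_right nsmul_uminus act_additive additive.zero simp flip: act_nsmul)

lemma submod_pM: "submod G act (pM p i)"
  unfolding pM_def by (rule submod_image_nsmul[OF submod_UNIV])

lemma submod_Union:
  assumes "B \<in> S" "0 \<in> B" and closed: "\<forall>X\<in>S. \<forall>Y\<in>S. qadd X Y \<in> S" "\<forall>X\<in>S. uminus ` X \<in> S"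
    "\<forall>g\<in>carrier G. \<forall>X\<in>S. act g ` X \<in> S"
  shows "submod G act (\<Union>S)"
  unfolding submod_def
proof (intro conjI ballI)
  show "0 \<in> \<Union>S"
    using assms(1,2) by blast
  show "x + y \<in> \<Union>S" if "x \<in> \<Union>S" "y \<in> \<Union>S" for x y
    using that closed(1) unfolding qadd_def by blast
  show "- x \<in> \<Union>S" if "x \<in> \<Union>S" for x
    using that closed(2) by blast
  show "act g x \<in> \<Union>S" if "g \<in> carrier G" "x \<in> \<Union>S" for g x
    using that closed(3) by blast
qed

lemma sum_left_translate:
  assumes "h \<in> carrier G"
  shows "(\<Sum>g\<in>carrier G. F (h \<otimes> g)) = (\<Sum>g\<in>carrier G. F g)"
  using sum.reindex[OF inj_on_cmult[OF assms], of F] surj_const_mult[OF assms] by (simp add: comp_def)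

lemma proj_mod_average:
  assumes u: "\<And>y::'m. nsmul (u * card (carrier G)) y = y"
    and W: "submod G act W" and K: "submod G act K" and L: "submod G act L"
    and \<pi>: "proj_mod W K L \<pi>"
  defines "\<rho> \<equiv> \<lambda>y. nsmul u (\<Sum>g\<in>carrier G. act g (\<pi> (act (inv g) y)))"
  shows "proj_mod W K L \<rho>" "\<And>h y. h \<in> carrier G \<Longrightarrow> y \<in> W \<Longrightarrow> \<rho> (act h y) = act h (\<rho> y)"
proof -
  have sgK: "add_subgroup K" and sgL: "add_subgroup L"
    using K L by (simp_all add: submod_add_subgroup)
  have actW: "act g y \<in> W" if "g \<in> carrier G" "y \<in> W" for g y
    using submod_act[OF W that] .
  note \<pi>K = proj_modD(1)[OF \<pi>] and \<pi>_add = proj_modD(2)[OF \<pi>] and \<pi>_id = proj_modD(3)[OF \<pi>]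
  have "\<rho> y \<in> K" if "y \<in> W" for y
    unfolding \<rho>_def
    by (intro add_subgroup_nsmul[OF sgK] add_subgroup_sum[OF sgK] submod_act[OF K] \<pi>K actW inv_closed that)
  moreover have "\<rho> (a + b) - \<rho> a - \<rho> b \<in> L" if "a \<in> W" "b \<in> W" for a b
  proof -
    have "\<rho> (a + b) - \<rho> a - \<rho> b = nsmul u (\<Sum>g\<in>carrier G.
        act g (\<pi> (act (inv g) a + act (inv g) b) - \<pi> (act (inv g) a) - \<pi> (act (inv g) b)))"
    proof -
      have "\<rho> (a + b) - \<rho> a - \<rho> b = nsmul u (\<Sum>g\<in>carrier G. act g (\<pi> (act (inv g) (a + b)))
          - act g (\<pi> (act (inv g) a)) - act g (\<pi> (act (inv g) b)))"
        unfolding \<rho>_def by (simp add: nsmul_diff sum_subtractf)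
      then show ?thesis
        by (simp add: act_diff act_additive additive.add)
    qed
    also have "\<dots> \<in> L"
      by (intro add_subgroup_nsmul[OF sgL] add_subgroup_sum[OF sgL] submod_act[OF L] \<pi>_add actW
          inv_closed that)
    finally show ?thesis .
  qed
  moreover have "\<rho> k - k \<in> L" if "k \<in> K" for k
  proof -
    have "(\<Sum>g\<in>carrier G. act g (\<pi> (act (inv g) k))) - nsmul (card (carrier G)) k
        = (\<Sum>g\<in>carrier G. act g (\<pi> (act (inv g) k) - act (inv g) k))"
      by (simp add: act_diff sum_subtractf flip: sum_constant_nsmul)
    also have "\<dots> \<in> L"
      by (intro add_subgroup_sum[OF sgL] submod_act[OF L] \<pi>_id submod_act[OF K] inv_closed that)
    finally have "nsmul u ((\<Sum>g\<in>carrier G. act g (\<pi> (act (inv g) k))) - nsmul (card (carrier G)) k) \<in> L"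
      by (rule add_subgroup_nsmul[OF sgL])
    then show ?thesis
      unfolding \<rho>_def by (simp add: nsmul_diff u flip: nsmul_mult)
  qed
  ultimately show "proj_mod W K L \<rho>"
    unfolding proj_mod_def by blast
  fix h y assume h: "h \<in> carrier G" and "y \<in> W"
  have "(\<Sum>g\<in>carrier G. act g (\<pi> (act (inv g) (act h y))))
      = (\<Sum>g\<in>carrier G. act (h \<otimes> g) (\<pi> (act (inv (h \<otimes> g)) (act h y))))"
    by (rule sum_left_translate[OF h, symmetric])
  also have "\<dots> = (\<Sum>g\<in>carrier G. act h (act g (\<pi> (act (inv g) y))))"
    using h by (intro sum.cong refl) (simp add: inv_mult_group act_mult)
  also have "\<dots> = act h (\<Sum>g\<in>carrier G. act g (\<pi> (act (inv g) y)))"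
    by (simp add: act_sum h)
  finally show "\<rho> (act h y) = act h (\<rho> y)"
    unfolding \<rho>_def by (simp add: act_nsmul h)
qed

lemma submod_proj_mod_kernel:
  assumes W: "submod G act W" and L: "submod G act L" and \<pi>: "proj_mod W K L \<pi>"
    and equivariant: "\<And>g y. g \<in> carrier G \<Longrightarrow> y \<in> W \<Longrightarrow> \<pi> (act g y) = act g (\<pi> y)"
  shows "submod G act {y \<in> W. \<pi> y \<in> L}"
  using add_subgroup_proj_mod_kernel[OF submod_add_subgroup[OF W] submod_add_subgroup[OF L] \<pi>]
    equivariant submod_act[OF W] submod_act[OF L]
  by (auto simp: submod_def add_subgroup_def)

lemma act_pow_minus_id_pM_Suc:
  fixes s :: nat
  assumes g: "g \<in> carrier G" and "j \<ge> 1" and in_pM: "\<And>y. act g y - y \<in> pM p j"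
    and "w \<in> pM p j"
  shows "act (g [^] s) w - w \<in> pM p (Suc j)"
proof -
  have sg: "add_subgroup (pM p (Suc j) :: 'm set)"
    by (rule submod_add_subgroup[OF submod_pM])
  have pow_closed: "g [^] r \<in> carrier G" for r :: nat
    using g by simp
  have shift: "act g v - v \<in> pM p (Suc j)" if "v \<in> pM p j" for v
  proof -
    obtain z where z: "v = nsmul (p ^ j) z"
      using \<open>v \<in> pM p j\<close> unfolding mem_pM_iff by blast
    obtain z' where "act g z - z = nsmul (p ^ j) z'"
      using in_pM[of z] unfolding mem_pM_iff by blast
    then have "act g v - v = nsmul (p ^ (j + j)) z'"
      using g by (simp add: z act_nsmul power_add nsmul_mult flip: nsmul_diff)
    then have "act g v - v \<in> pM p (j + j)"
      unfolding mem_pM_iff by blast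
    moreover have "pM p (j + j) \<subseteq> pM p (Suc j)"
      using \<open>j \<ge> 1\<close> by (intro pM_antimono) simp
    ultimately show ?thesis
      by blast
  qed
  show ?thesis
  proof (induction s)
    case 0
    then show ?case
      using add_subgroup_0[OF sg] by simp
  next
    case (Suc s)
    have eq: "act (g [^] Suc s) w - w = (act (g [^] s) w - w) + act (g [^] s) (act g w - w)"
      by (simp add: act_mult[OF pow_closed g] act_diff[OF pow_closed])
    have "act (g [^] s) (act g w - w) \<in> pM p (Suc j)"
      using submod_act[OF submod_pM pow_closed shift[OF \<open>w \<in> pM p j\<close>]] .
    then show ?case
      unfolding eq by (rule add_subgroup_add[OF sg Suc.IH])
  qed
qed

text \<open>Modulo \<open>p\<^sup>j\<^sup>+\<^sup>1M\<close>, \<open>g\<^sup>r\<close> acts as \<open>1 + r (g - 1)\<close>; take \<open>r = |G|\<close> and invert \<open>|G|\<close>.\<close>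

lemma act_minus_id_pM_Suc:
  assumes u: "\<And>y::'m. nsmul (u * card (carrier G)) y = y" and g: "g \<in> carrier G" and "j \<ge> 1"
    and in_pM: "\<And>y. act g y - y \<in> pM p j"
  shows "act g y - y \<in> pM p (Suc j)"
proof -
  have sg: "add_subgroup (pM p (Suc j) :: 'm set)"
    by (rule submod_add_subgroup[OF submod_pM])
  have pow_closed: "g [^] r \<in> carrier G" for r :: nat
    using g by simp
  have binomial: "act (g [^] r) y - y - nsmul r (act g y - y) \<in> pM p (Suc j)" for r :: nat
  proof (induction r)
    case 0
    then show ?case
      using add_subgroup_0[OF sg] by simp
  next
    case (Suc r)
    have eq: "act (g [^] Suc r) y - y - nsmul (Suc r) (act g y - y)
        = (act (g [^] r) y - y - nsmul r (act g y - y)) + (act (g [^] r) (act g y - y) - (act g y - y))"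
      by (simp add: act_mult[OF pow_closed g] act_diff[OF pow_closed] nsmul_Suc algebra_simps)
    have "act (g [^] r) (act g y - y) - (act g y - y) \<in> pM p (Suc j)"
      using act_pow_minus_id_pM_Suc[OF g \<open>j \<ge> 1\<close> in_pM in_pM] .
    then show ?case
      unfolding eq by (rule add_subgroup_add[OF sg Suc.IH])
  qed
  have "g [^] card (carrier G) = \<one>"
    using pow_order_eq_1[OF g] by (simp add: order_def)
  then have "- nsmul (card (carrier G)) (act g y - y) \<in> pM p (Suc j)"
    using binomial[of "card (carrier G)"] by simp
  then have "nsmul u (nsmul (card (carrier G)) (act g y - y)) \<in> pM p (Suc j)"
    using add_subgroup_uminus[OF sg] add_subgroup_nsmul[OF sg] by fastforce
  then show ?thesis
    by (simp add: u flip: nsmul_mult)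
qed

end

section \<open>Coprime actions on abelian \<open>p\<close>-groups\<close>

locale coprime_Gmodule = Gmodule G act
  for G :: "('g, 'b) monoid_scheme" (structure) and act :: "'g \<Rightarrow> 'm::{ab_group_add,finite} \<Rightarrow> 'm" +
  fixes p m :: nat
  assumes prime: "prime p" and not_dvd_card: "\<not> p dvd card (carrier G)"
    and kill: "\<And>x::'m. nsmul (p ^ m) x = 0"
begin

lemma card_invertible: "\<exists>u. \<forall>y::'m. nsmul (u * card (carrier G)) y = y"
proof -
  obtain u t where "u * card (carrier G) = p ^ m * t + 1"
    using prime_power_inverse_mod[OF prime not_dvd_card] by blast
  then have "u * card (carrier G) = t * p ^ m + 1"
    by (simp add: mult.commute)
  then have "nsmul (u * card (carrier G)) y = nsmul t (nsmul (p ^ m) y) + y" for y :: 'm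
    by (simp only: nsmul_add_left nsmul_mult nsmul_1)
  then have "\<forall>y::'m. nsmul (u * card (carrier G)) y = y"
    by (simp add: kill)
  then show ?thesis
    by blast
qed

lemma submod_rel_complement:
  assumes W: "submod G act W" and K: "submod G act K" and L: "submod G act L"
    and "L \<subseteq> K" "K \<subseteq> W"
    and pure: "\<And>C y. add_subgroup C \<Longrightarrow> C \<subseteq> W \<Longrightarrow> L \<subseteq> C \<Longrightarrow> C \<inter> K \<subseteq> L \<Longrightarrow> y \<in> W \<Longrightarrow>
      nsmul p y \<in> C + K \<Longrightarrow> \<exists>f\<in>K. nsmul p (y - f) \<in> C"
  shows "\<exists>C. submod G act C \<and> rel_complement W K L C"
proof -
  have sg: "add_subgroup W" "add_subgroup K" "add_subgroup L"
    using W K L by (simp_all add: submod_add_subgroup)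
  obtain C' where "add_subgroup C'" "rel_complement W K L C'"
    using rel_complement_subgroup_exists[OF prime kill sg assms(4,5) pure] by blast
  then obtain \<pi> where "proj_mod W K L \<pi>"
    using proj_mod_of_rel_complement[OF sg] assms(5) by blast
  obtain u where u: "\<And>y::'m. nsmul (u * card (carrier G)) y = y"
    using card_invertible by blast
  let ?\<rho> = "\<lambda>y. nsmul u (\<Sum>g\<in>carrier G. act g (\<pi> (act (inv g) y)))"
  have "proj_mod W K L ?\<rho>" "\<And>h y. h \<in> carrier G \<Longrightarrow> y \<in> W \<Longrightarrow> ?\<rho> (act h y) = act h (?\<rho> y)"
    using proj_mod_average[OF u W K L \<open>proj_mod W K L \<pi>\<close>] by blast+
  then show ?thesis
    using submod_proj_mod_kernel[OF W L] rel_complement_proj_mod_kernel[OF sg(1,3) assms(4,5)] by blast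
qed

lemma kernel_subset_p_multiples:
  assumes W: "submod G act W" and kill_W: "\<forall>x\<in>W. nsmul (p ^ k) x = 0"
    and "x \<in> W" "nsmul (p ^ (k - 1)) x \<noteq> 0"
    and proper: "\<And>T. submod G act T \<Longrightarrow> T \<subset> W \<Longrightarrow> \<forall>y\<in>T. nsmul (p ^ (k - 1)) y = 0"
  shows "{y \<in> W. nsmul (p ^ (k - 1)) y = 0} \<subseteq> nsmul p ` W"
proof -
  define Wk where "Wk = {y \<in> W. nsmul (p ^ (k - 1)) y = 0}"
  define pW where "pW = nsmul p ` W"
  have Wk: "submod G act Wk" and pW: "submod G act pW"
    unfolding Wk_def pW_def using W by (simp_all add: submod_kernel_nsmul submod_image_nsmul)
  have sgW: "add_subgroup W"
    using W by (rule submod_add_subgroup)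
  have "pW \<subseteq> W" "Wk \<subseteq> W"
    unfolding Wk_def pW_def using add_subgroup_nsmul[OF sgW] by auto
  then have "Wk + pW \<subseteq> W"
    using set_plus_subset[OF sgW] by blast
  have "pW \<subseteq> Wk + pW"
    using set_zero_plus2 add_subgroup_0[OF submod_add_subgroup[OF Wk]] by blast
  have "Wk \<subseteq> Wk + pW"
    using set_plus_intro[OF _ add_subgroup_0[OF submod_add_subgroup[OF pW]], of _ Wk] by force
  have "\<exists>C. submod G act C \<and> rel_complement W (Wk + pW) pW C"
  proof (rule submod_rel_complement[OF W submod_set_plus[OF Wk pW] pW \<open>pW \<subseteq> Wk + pW\<close> \<open>Wk + pW \<subseteq> W\<close>])
    fix C y assume "pW \<subseteq> C" "y \<in> W"
    then have "nsmul p (y - 0) \<in> C"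
      unfolding pW_def by auto
    then show "\<exists>f\<in>Wk + pW. nsmul p (y - f) \<in> C"
      using \<open>Wk \<subseteq> Wk + pW\<close> add_subgroup_0[OF submod_add_subgroup[OF Wk]] by blast
  qed
  then obtain C where C: "submod G act C" "rel_complement W (Wk + pW) pW C"
    by blast
  have "C = W"
  proof (rule ccontr)
    assume "C \<noteq> W"
    then have "C \<subset> W"
      using C(2) unfolding rel_complement_def by blast
    then have "C \<subseteq> Wk"
      using proper[OF C(1)] unfolding Wk_def by blast
    have "W \<subseteq> Wk + pW"
    proof
      fix y assume "y \<in> W"
      then have "y \<in> C + (Wk + pW)"
        using C(2) unfolding rel_complement_def by blast
      then obtain c d where "c \<in> C" "d \<in> Wk + pW" "y = c + d"
        by (blast elim: set_plus_elim)
      moreover obtain a b where "a \<in> Wk" "b \<in> pW" "d = a + b"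
        using \<open>d \<in> Wk + pW\<close> by (blast elim: set_plus_elim)
      ultimately have "c \<in> C" "a \<in> Wk" "b \<in> pW" "y = c + (a + b)"
        by simp_all
      moreover have "c + a \<in> Wk"
        using add_subgroup_add[OF submod_add_subgroup[OF Wk]] \<open>C \<subseteq> Wk\<close> calculation by blast
      ultimately show "y \<in> Wk + pW"
        using set_plus_intro[of "c + a" Wk b pW] by (simp add: add.assoc)
    qed
    then have "W \<subseteq> Wk"
      using nakayama_nsmul[OF submod_add_subgroup[OF Wk] _ kill_W] unfolding pW_def by blast
    then show False
      using assms(3,4) unfolding Wk_def by blast
  qed
  then have "Wk \<subseteq> pW"
    using C(2) \<open>Wk \<subseteq> W\<close> \<open>Wk \<subseteq> Wk + pW\<close> unfolding rel_complement_def by blast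
  then show ?thesis
    unfolding Wk_def pW_def .
qed

lemma decomposableI:
  assumes W: "submod G act W" "W \<noteq> {0}" "W \<noteq> UNIV"
    and "k \<ge> 1" and kill_k: "\<And>x::'m. nsmul (p ^ k) x = 0"
    and pure: "{y \<in> W. nsmul (p ^ (k - 1)) y = 0} \<subseteq> nsmul p ` W"
  shows "decomposable G act"
proof -
  have sgW: "add_subgroup W"
    using W(1) by (rule submod_add_subgroup)
  have "\<exists>C. submod G act C \<and> rel_complement UNIV W {0} C"
  proof (rule submod_rel_complement[OF submod_UNIV W(1) submod_zero _ subset_UNIV])
    show "{0} \<subseteq> W"
      using add_subgroup_0[OF sgW] by blast
  next
    fix C y assume C: "add_subgroup C" "C \<inter> W \<subseteq> {0}" and "nsmul p y \<in> C + W"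
    then obtain c w where "c \<in> C" "w \<in> W" and py: "nsmul p y = c + w"
      by (blast elim: set_plus_elim)
    have pk: "p ^ (k - 1) * p = p ^ k"
      using \<open>k \<ge> 1\<close> by (cases k) simp_all
    have "nsmul (p ^ (k - 1)) c + nsmul (p ^ (k - 1)) w = nsmul (p ^ (k - 1) * p) y"
      by (simp only: nsmul_mult py nsmul_add_right)
    also have "\<dots> = 0"
      unfolding pk
      by (rule kill_k)
    finally have "nsmul (p ^ (k - 1)) w = - nsmul (p ^ (k - 1)) c"
      by (simp add: eq_neg_iff_add_eq_0 add.commute)
    moreover have "- nsmul (p ^ (k - 1)) c \<in> C" "nsmul (p ^ (k - 1)) w \<in> W"
      using \<open>c \<in> C\<close> \<open>w \<in> W\<close> C(1) sgW by (simp_all add: add_subgroup_uminus add_subgroup_nsmul)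
    ultimately have "nsmul (p ^ (k - 1)) w = 0"
      using C(2) by auto
    then obtain f where "f \<in> W" "w = nsmul p f"
      using pure \<open>w \<in> W\<close> by blast
    then have "nsmul p (y - f) = c"
      using py by (simp add: nsmul_diff)
    then show "\<exists>f\<in>W. nsmul p (y - f) \<in> C"
      using \<open>f \<in> W\<close> \<open>c \<in> C\<close> by blast
  qed
  then obtain C where C: "submod G act C" "rel_complement UNIV W {0} C"
    by blast
  show ?thesis
    unfolding decomposable_def
  proof (rule exI[of _ W], rule exI[of _ C], intro conjI allI)
    show "submod G act W" "W \<noteq> {0}" "submod G act C"
      by (fact W(1) W(2) C(1))+
    show "C \<noteq> {0}"
    proof
      assume "C = {0}"
      then have "UNIV \<subseteq> W"
        using C(2) unfolding rel_complement_def by simp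
      then show False
        using W(3) by blast
    qed
    show "W \<inter> C = {0}"
      using C(2) add_subgroup_0[OF sgW] add_subgroup_0[OF submod_add_subgroup[OF C(1)]]
      unfolding rel_complement_def by blast
    fix x
    obtain c w where "c \<in> C" "w \<in> W" "x = c + w"
      using C(2) unfolding rel_complement_def by (blast elim: set_plus_elim)
    then show "\<exists>a\<in>W. \<exists>b\<in>C. x = a + b"
      by (metis add.commute)
  qed
qed

theorem expo_proper_submod_less:
  assumes "\<not> decomposable G act" "(x::'m) \<noteq> 0" "submod G act N" "N \<noteq> UNIV"
  shows "expo N < expo (UNIV::'m set)"
proof (rule ccontr)
  obtain k where k: "expo (UNIV::'m set) = p ^ k"
    using expo_prime_power[OF prime, of UNIV m] kill by auto
  note k_facts = expo_UNIV_eq_prime_powerD[OF prime kill k assms(2)]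
  let ?killed = "\<lambda>T::'m set. \<forall>y\<in>T. nsmul (p ^ (k - 1)) y = 0"
  assume "\<not> expo N < expo (UNIV::'m set)"
  then have "\<not> ?killed N"
    using expo_less_prime_power_iff[OF prime k_facts(1), of N] k_facts(2) k by simp
  define F where "F = {T. submod G act T \<and> T \<noteq> UNIV \<and> \<not> ?killed T}"
  have "N \<in> F"
    unfolding F_def using assms(3,4) \<open>\<not> ?killed N\<close> by blast
  then have "\<exists>W\<in>F. \<forall>T\<in>F. T \<subseteq> W \<longrightarrow> W = T"
    by (intro finite_has_minimal) auto
  then obtain W where "W \<in> F" and W_min: "\<And>T. T \<in> F \<Longrightarrow> T \<subseteq> W \<Longrightarrow> W = T"
    by blast
  then have W: "submod G act W" "W \<noteq> UNIV" and "\<not> ?killed W"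
    unfolding F_def by auto
  then obtain x where "x \<in> W" "nsmul (p ^ (k - 1)) x \<noteq> 0"
    by blast
  have "{y \<in> W. nsmul (p ^ (k - 1)) y = 0} \<subseteq> nsmul p ` W"
  proof (rule kernel_subset_p_multiples[OF W(1) _ \<open>x \<in> W\<close> \<open>nsmul (p ^ (k - 1)) x \<noteq> 0\<close>])
    show "\<forall>x\<in>W. nsmul (p ^ k) x = 0"
      using k_facts(2) by blast
  next
    fix T assume "submod G act T" "T \<subset> W"
    then show "?killed T"
      using W_min[of T] W(2) unfolding F_def by blast
  qed
  moreover have "W \<noteq> {0}"
    using \<open>x \<in> W\<close> \<open>nsmul (p ^ (k - 1)) x \<noteq> 0\<close> by auto
  ultimately have "decomposable G act"
    using decomposableI[OF W(1) _ W(2) k_facts(1,2)] by blast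
  then show False
    using assms(1) by blast
qed

end

section \<open>Generating sets modulo \<open>p\<close>\<close>

definition generates_mod :: "nat \<Rightarrow> 'm::ab_group_add set \<Rightarrow> bool" where
  "generates_mod q X \<longleftrightarrow> (\<forall>y. \<exists>c w. y = (\<Sum>x\<in>X. nsmul (c x) x) + nsmul q w)"

lemma sum_nsmul_delta:
  assumes "finite X" "x0 \<in> X"
  shows "(\<Sum>x\<in>X. nsmul (if x = x0 then n else 0) x) = nsmul n x0"
proof -
  have "(\<Sum>x\<in>X. nsmul (if x = x0 then n else 0) x) = (\<Sum>x\<in>X. if x = x0 then nsmul n x else 0)"
    by (intro sum.cong) simp_all
  then show ?thesis
    using assms by simp
qed

lemma generates_mod_UNIV: "generates_mod q (UNIV :: 'm::{ab_group_add,finite} set)"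
  unfolding generates_mod_def
proof
  fix y :: 'm
  have "y = (\<Sum>x\<in>UNIV. nsmul (if x = y then 1 else 0) x) + nsmul q 0"
    by (simp add: sum_nsmul_delta)
  then show "\<exists>c w. y = (\<Sum>x\<in>UNIV. nsmul (c x) x) + nsmul q w"
    by (intro exI)
qed

lemma generates_mod_Diff:
  assumes gen: "generates_mod q X" and "finite X" "x0 \<in> X"
    and x0: "x0 = (\<Sum>x\<in>X - {x0}. nsmul (d x) x) + nsmul q w0"
  shows "generates_mod q (X - {x0})"
  unfolding generates_mod_def
proof
  fix y
  obtain c w where y: "y = (\<Sum>x\<in>X. nsmul (c x) x) + nsmul q w"
    using gen unfolding generates_mod_def by blast
  have "(\<Sum>x\<in>X. nsmul (c x) x) = nsmul (c x0) x0 + (\<Sum>x\<in>X - {x0}. nsmul (c x) x)"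
    using sum.remove[OF assms(2,3)] .
  also have "nsmul (c x0) x0 = (\<Sum>x\<in>X - {x0}. nsmul (c x0 * d x) x) + nsmul q (nsmul (c x0) w0)"
    by (subst x0) (simp add: nsmul_add_right nsmul_sum nsmul_mult nsmul_commute[of "c x0" q])
  finally have "y = (\<Sum>x\<in>X - {x0}. nsmul (c x0 * d x + c x) x) + nsmul q (nsmul (c x0) w0 + w)"
    using y by (simp add: nsmul_add_left sum.distrib nsmul_add_right algebra_simps)
  then show "\<exists>c w. y = (\<Sum>x\<in>X - {x0}. nsmul (c x) x) + nsmul q w"
    by (intro exI)
qed

lemma generates_mod_power:
  assumes "generates_mod p X"
  shows "generates_mod (p ^ j) X"
proof (induction j)
  case 0
  show ?case
    unfolding generates_mod_def by (intro allI exI[of _ "\<lambda>_. 0"] exI) simp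
next
  case (Suc j)
  show ?case
    unfolding generates_mod_def
  proof
    fix y
    obtain c w where y: "y = (\<Sum>x\<in>X. nsmul (c x) x) + nsmul (p ^ j) w"
      using Suc.IH unfolding generates_mod_def by blast
    obtain c' w' where w: "w = (\<Sum>x\<in>X. nsmul (c' x) x) + nsmul p w'"
      using assms unfolding generates_mod_def by blast
    have "nsmul (p ^ j) w = (\<Sum>x\<in>X. nsmul (p ^ j * c' x) x) + nsmul (p ^ Suc j) w'"
      unfolding w by (simp add: nsmul_add_right nsmul_sum mult.commute flip: nsmul_mult)
    then have "y = (\<Sum>x\<in>X. nsmul (c x + p ^ j * c' x) x) + nsmul (p ^ Suc j) w'"
      using y by (simp add: nsmul_add_left sum.distrib add.assoc)
    then show "\<exists>c w. y = (\<Sum>x\<in>X. nsmul (c x) x) + nsmul (p ^ Suc j) w"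
      by (intro exI)
  qed
qed

definition min_generating_mod :: "nat \<Rightarrow> 'm::ab_group_add set \<Rightarrow> bool" where
  "min_generating_mod q X \<longleftrightarrow> generates_mod q X \<and> (\<forall>Y::'m set. generates_mod q Y \<longrightarrow> card X \<le> card Y)"

lemma exists_min_generating_mod: "\<exists>X::'m::{ab_group_add,finite} set. min_generating_mod q X"
  unfolding min_generating_mod_def
  using ex_has_least_nat[of "generates_mod q" UNIV card] generates_mod_UNIV by blast

lemma min_generating_mod_irredundant:
  fixes X :: "'m::{ab_group_add,finite} set"
  assumes "min_generating_mod q X" "x0 \<in> X"
  shows "x0 \<noteq> (\<Sum>x\<in>X - {x0}. nsmul (d x) x) + nsmul q w"
proof
  assume "x0 = (\<Sum>x\<in>X - {x0}. nsmul (d x) x) + nsmul q w"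
  then have "generates_mod q (X - {x0})"
    using assms(1) unfolding min_generating_mod_def by (intro generates_mod_Diff[OF _ finite assms(2)]) auto
  then have "card X \<le> card (X - {x0})"
    using assms(1) unfolding min_generating_mod_def by blast
  then show False
    using card_Diff1_less[OF _ assms(2)] by simp
qed

lemma eq_of_dvd_add_diff:
  fixes a b q :: nat
  assumes "a < q" "b < q" "q dvd a + (q - b)"
  shows "a = b"
proof -
  obtain t where t: "a + (q - b) = q * t"
    using assms(3) by blast
  have "0 < q * t" "q * t < q * 2"
    using assms t by linarith+
  then have "t = 1"
    by simp
  then show ?thesis
    using t assms by simp
qed

lemma aord_eq_of_indep:
  fixes X :: "'m::ab_group_add set"
  assumes "finite X" "q > 0" and kill_q: "\<And>x::'m. nsmul q x = 0"
    and indep: "\<And>d. (\<Sum>x\<in>X. nsmul (d x) x) = 0 \<Longrightarrow> \<forall>x\<in>X. q dvd d x"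
    and "x \<in> X"
  shows "aord x = q"
proof -
  have "expo {x} > 0" "nsmul (expo {x}) x = 0"
    using expo_kills[of q "{x}"] assms(2) kill_q by auto
  then have "\<forall>y\<in>X. q dvd (if y = x then expo {x} else 0)"
    using indep[of "\<lambda>y. if y = x then expo {x} else 0"] sum_nsmul_delta[OF assms(1,5)] by simp
  then have "q dvd (if x = x then expo {x} else 0)"
    using \<open>x \<in> X\<close> by (rule bspec)
  then have "q \<le> expo {x}"
    using \<open>expo {x} > 0\<close> by (simp add: dvd_imp_le)
  moreover have "expo {x} \<le> q"
    using assms(2) kill_q by (intro expo_le) simp_all
  ultimately show ?thesis
    unfolding aord_def by simp
qed

lemma sum_nsmul_coeffs_unique:
  fixes X :: "'m::ab_group_add set"
  assumes kill_q: "\<And>x::'m. nsmul q x = 0"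
    and indep: "\<And>d. (\<Sum>x\<in>X. nsmul (d x) x) = 0 \<Longrightarrow> \<forall>x\<in>X. q dvd d x"
    and lt: "\<And>x. x \<in> X \<Longrightarrow> c1 x < q" "\<And>x. x \<in> X \<Longrightarrow> c2 x < q"
    and eq: "(\<Sum>x\<in>X. nsmul (c1 x) x) = (\<Sum>x\<in>X. nsmul (c2 x) x)"
  shows "x \<in> X \<Longrightarrow> c1 x = c2 x"
proof -
  have "(\<Sum>x\<in>X. nsmul (c1 x + (q - c2 x)) x)
      = (\<Sum>x\<in>X. nsmul (c2 x) x) + (\<Sum>x\<in>X. nsmul (q - c2 x) x)"
    by (simp add: nsmul_add_left sum.distrib eq)
  also have "\<dots> = (\<Sum>x\<in>X. nsmul (c2 x + (q - c2 x)) x)"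
    by (simp add: nsmul_add_left sum.distrib)
  also have "\<dots> = 0"
    using lt(2) by (simp add: kill_q less_imp_le)
  finally have "\<forall>x\<in>X. q dvd c1 x + (q - c2 x)"
    by (rule indep)
  then show "x \<in> X \<Longrightarrow> c1 x = c2 x"
    using eq_of_dvd_add_diff lt by blast
qed

lemma homog_UNIV_of_basis:
  fixes X :: "'m::ab_group_add set"
  assumes "finite X" "q > 0" and kill_q: "\<And>x::'m. nsmul q x = 0"
    and span: "\<And>y. \<exists>c. y = (\<Sum>x\<in>X. nsmul (c x) x)"
    and indep: "\<And>d. (\<Sum>x\<in>X. nsmul (d x) x) = 0 \<Longrightarrow> \<forall>x\<in>X. q dvd d x"
  shows "homog (UNIV::'m set) q"
proof -
  obtain xs where xs: "distinct xs" "set xs = X"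
    using finite_distinct_list[OF assms(1)] by blast
  have sum_list_eq: "sum_list (map2 nsmul (map c xs) xs) = (\<Sum>x\<in>X. nsmul (c x) x)" for c
    using xs by (simp add: zip_map1 zip_same_conv_map sum_list_distinct_conv_sum_set comp_def)
  define coeff where "coeff cs x = the (map_of (zip xs cs) x)" for cs :: "nat list" and x
  have map_coeff: "map (coeff cs) xs = cs" if "length cs = length xs" for cs
    by (rule nth_equalityI) (simp_all add: that coeff_def map_of_zip_nth xs(1))
  show ?thesis
    unfolding homog_def
  proof (intro exI conjI ballI)
    show "set xs \<subseteq> UNIV" "\<And>x. x \<in> set xs \<Longrightarrow> aord x = q"
      using aord_eq_of_indep[OF assms(1,2) kill_q indep] xs(2) by auto
    fix y :: 'm
    obtain c where c: "y = (\<Sum>x\<in>X. nsmul (c x) x)"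
      using span by blast
    show "\<exists>!cs. length cs = length xs \<and> (\<forall>c\<in>set cs. c < q) \<and> y = sum_list (map2 nsmul cs xs)"
    proof (rule ex_ex1I)
      have "y = (\<Sum>x\<in>X. nsmul (c x mod q) x)"
        unfolding c by (intro sum.cong refl) (simp add: nsmul_mod kill_q)
      then show "\<exists>cs. length cs = length xs \<and> (\<forall>c\<in>set cs. c < q) \<and> y = sum_list (map2 nsmul cs xs)"
        using assms(2) sum_list_eq[of "\<lambda>x. c x mod q"] by (intro exI[of _ "map (\<lambda>x. c x mod q) xs"]) auto
    next
      fix cs1 cs2
      assume h1: "length cs1 = length xs \<and> (\<forall>c\<in>set cs1. c < q) \<and> y = sum_list (map2 nsmul cs1 xs)"
        and h2: "length cs2 = length xs \<and> (\<forall>c\<in>set cs2. c < q) \<and> y = sum_list (map2 nsmul cs2 xs)"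
      then have m: "map (coeff cs1) xs = cs1" "map (coeff cs2) xs = cs2"
        using map_coeff by simp_all
      have "coeff cs1 x = coeff cs2 x" if "x \<in> X" for x
      proof (rule sum_nsmul_coeffs_unique[OF kill_q indep _ _ _ that])
        show "coeff cs1 x < q" "coeff cs2 x < q" if "x \<in> X" for x
          using h1 h2 m that xs(2) by (metis imageI list.set_map)+
        show "(\<Sum>x\<in>X. nsmul (coeff cs1 x) x) = (\<Sum>x\<in>X. nsmul (coeff cs2 x) x)"
          using h1 h2 m sum_list_eq[of "coeff cs1"] sum_list_eq[of "coeff cs2"] by simp
      qed
      then have "map (coeff cs1) xs = map (coeff cs2) xs"
        using xs(2) by simp
      then show "cs1 = cs2"
        using m by simp
    qed
  qed
qed

section \<open>Modules whose proper submodules have smaller exponent\<close>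

locale critical_Gmodule = coprime_Gmodule G act p m
  for G :: "('g, 'b) monoid_scheme" (structure) and act :: "'g \<Rightarrow> 'm::{ab_group_add,finite} \<Rightarrow> 'm"
    and p m :: nat +
  fixes k :: nat
  assumes k_ge_1: "k \<ge> 1" and kill_k: "\<And>x::'m. nsmul (p ^ k) x = 0"
    and top_layer_nonzero: "\<exists>x::'m. nsmul (p ^ (k - 1)) x \<noteq> 0"
    and proper_submod_killed: "\<And>N. submod G act N \<Longrightarrow> N \<noteq> UNIV \<Longrightarrow> \<forall>y\<in>N. nsmul (p ^ (k - 1)) y = 0"
begin

lemma top_kernel_divisible:
  fixes y :: 'm
  assumes "nsmul (p ^ (k - 1)) y = 0"
  shows "\<exists>z. y = nsmul p z"
proof -
  obtain x :: 'm where x: "nsmul (p ^ (k - 1)) x \<noteq> 0"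
    using top_layer_nonzero by blast
  have kill_UNIV: "\<forall>x\<in>UNIV::'m set. nsmul (p ^ k) x = 0"
    using kill_k by blast
  have proper: "\<forall>y\<in>T. nsmul (p ^ (k - 1)) y = 0" if "submod G act T" "T \<subset> UNIV" for T :: "'m set"
    using that by (intro proper_submod_killed) auto
  have "{y \<in> UNIV::'m set. nsmul (p ^ (k - 1)) y = 0} \<subseteq> nsmul p ` UNIV"
    by (rule kernel_subset_p_multiples[OF submod_UNIV kill_UNIV UNIV_I x proper])
  then show ?thesis
    using assms by blast
qed

lemma divisible_of_layer:
  fixes y :: 'm
  assumes "i < k" "nsmul (p ^ i) y \<in> pM p (Suc i)"
  shows "\<exists>w. y = nsmul p w"
proof -
  obtain z where "nsmul (p ^ i) y = nsmul (p ^ Suc i) z"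
    using assms(2) unfolding mem_pM_iff by blast
  then have "nsmul (p ^ i) (y - nsmul p z) = 0"
    by (simp add: nsmul_diff mult.commute flip: nsmul_mult)
  moreover have "p ^ (k - 1) = p ^ (k - 1 - i) * p ^ i"
    using assms(1) by (simp flip: power_add)
  ultimately have "nsmul (p ^ (k - 1)) (y - nsmul p z) = 0"
    by (simp add: nsmul_mult)
  then obtain w where "y - nsmul p z = nsmul p w"
    using top_kernel_divisible by blast
  then have "y = nsmul p (w + z)"
    by (simp add: nsmul_add_right algebra_simps)
  then show ?thesis ..
qed

lemma layer_shift:
  fixes y :: 'm
  assumes "i < k" "nsmul (p ^ i) y \<in> pM p (Suc i)"
  shows "nsmul (p ^ j) y \<in> pM p (Suc j)"
proof -
  obtain w where "y = nsmul p w"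
    using divisible_of_layer[OF assms] by blast
  then have "nsmul (p ^ j) y = nsmul (p ^ Suc j) w"
    by (simp add: mult.commute flip: nsmul_mult)
  then show ?thesis
    unfolding mem_pM_iff by blast
qed

lemma layer_submod_cases:
  assumes T: "submod G act T" and "pM p (Suc i) \<subseteq> T" "T \<subseteq> pM p i"
  shows "T = pM p (Suc i) \<or> T = pM p i"
proof -
  define T' where "T' = {y. nsmul (p ^ i) y \<in> T}"
  have sgT: "add_subgroup T"
    using T by (rule submod_add_subgroup)
  have T': "submod G act T'"
    unfolding submod_def T'_def
    using T add_subgroup_0[OF sgT] add_subgroup_add[OF sgT] add_subgroup_uminus[OF sgT]
    by (auto simp: nsmul_add_right nsmul_uminus submod_def simp flip: act_nsmul)
  show ?thesis
  proof (cases "T' = UNIV")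
    case True
    have "pM p i \<subseteq> T"
    proof
      fix x :: 'm assume "x \<in> pM p i"
      then obtain y where "x = nsmul (p ^ i) y"
        unfolding mem_pM_iff by blast
      moreover have "y \<in> T'"
        using True by simp
      ultimately show "x \<in> T"
        unfolding T'_def by simp
    qed
    then show ?thesis
      using assms(3) by blast
  next
    case False
    have "T \<subseteq> pM p (Suc i)"
    proof
      fix t assume "t \<in> T"
      then have "t \<in> pM p i"
        using assms(3) by blast
      then obtain y where y: "t = nsmul (p ^ i) y"
        unfolding mem_pM_iff by blast
      then have "nsmul (p ^ (k - 1)) y = 0"
        using proper_submod_killed[OF T' False] \<open>t \<in> T\<close> unfolding T'_def by blast
      then obtain z where "y = nsmul p z"
        using top_kernel_divisible by blast
      then have "t = nsmul (p ^ Suc i) z"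
        using y by (simp add: mult.commute flip: nsmul_mult)
      then show "t \<in> pM p (Suc i)"
        unfolding mem_pM_iff by blast
    qed
    then show ?thesis
      using assms(2) by blast
  qed
qed

theorem layer_qsimple:
  assumes "i < k"
  shows "qsimple G act (pM p i) (pM p (Suc i))"
  unfolding qsimple_def
proof (intro conjI allI impI)
  let ?A = "pM p i :: 'm set" and ?B = "pM p (Suc i) :: 'm set"
  have sgB: "add_subgroup ?B"
    by (rule submod_add_subgroup[OF submod_pM])
  obtain x :: 'm where x: "nsmul (p ^ (k - 1)) x \<noteq> 0"
    using top_layer_nonzero by blast
  show "\<exists>X\<in>quot ?A ?B. X \<noteq> ?B"
  proof
    show "coset (nsmul (p ^ i) x) ?B \<in> quot ?A ?B"
      unfolding quot_pM_iff by blast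
    show "coset (nsmul (p ^ i) x) ?B \<noteq> ?B"
    proof
      assume "coset (nsmul (p ^ i) x) ?B = ?B"
      then have "nsmul (p ^ i) x \<in> ?B"
        using coset_eq_iff[OF sgB, of "nsmul (p ^ i) x" 0] by simp
      then obtain z where "x = nsmul p z"
        using divisible_of_layer[OF assms] by blast
      moreover have "p ^ (k - 1) * p = p ^ k"
        using k_ge_1 by (cases k) simp_all
      ultimately have "nsmul (p ^ (k - 1)) x = nsmul (p ^ k) z"
        by (metis nsmul_mult)
      then show False
        using x kill_k by simp
    qed
  qed
next
  fix S
  let ?A = "pM p i :: 'm set" and ?B = "pM p (Suc i) :: 'm set"
  have sgA: "add_subgroup ?A" and sgB: "add_subgroup ?B"
    by (rule submod_add_subgroup[OF submod_pM])+
  assume S: "S \<subseteq> quot ?A ?B"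
    and closed: "?B \<in> S \<and> (\<forall>X\<in>S. \<forall>Y\<in>S. qadd X Y \<in> S) \<and> (\<forall>X\<in>S. uminus ` X \<in> S) \<and>
      (\<forall>g\<in>carrier G. \<forall>X\<in>S. act g ` X \<in> S)"
  have "submod G act (\<Union>S)"
    using closed add_subgroup_0[OF sgB] by (intro submod_Union) blast+
  moreover have "?B \<subseteq> \<Union>S"
    using closed by blast
  moreover have "\<Union>S \<subseteq> ?A"
    using Union_quot_subset[OF sgA pM_antimono S] by simp
  ultimately consider "\<Union>S = ?B" | "\<Union>S = ?A"
    using layer_submod_cases by blast
  then show "S = {?B} \<or> S = quot ?A ?B"
    using Union_quot_eq_bottom[OF sgB S] Union_quot_eq_top[OF sgB S] S closed by blast
qed

theorem layers_qiso:
  assumes "i < k" "j < k"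
  shows "qiso G act (pM p i) (pM p (Suc i)) (pM p j) (pM p (Suc j))"
proof -
  let ?Bi = "pM p (Suc i) :: 'm set" and ?Bj = "pM p (Suc j) :: 'm set"
  have sgBi: "add_subgroup ?Bi" and sgBj: "add_subgroup ?Bj"
    by (rule submod_add_subgroup[OF submod_pM])+
  have shift: "nsmul (p ^ j) a - nsmul (p ^ j) b \<in> ?Bj \<longleftrightarrow> nsmul (p ^ i) a - nsmul (p ^ i) b \<in> ?Bi"
    for a b :: 'm
    using layer_shift[OF assms(1), of "a - b" j] layer_shift[OF assms(2), of "a - b" i]
    by (auto simp: nsmul_diff)
  define \<phi> where "\<phi> X = {z. \<exists>y. nsmul (p ^ i) y \<in> X \<and> z - nsmul (p ^ j) y \<in> ?Bj}" for X
  have \<phi>_coset: "\<phi> (coset (nsmul (p ^ i) y) ?Bi) = coset (nsmul (p ^ j) y) ?Bj" for y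
  proof (intro Set.set_eqI iffI)
    fix z assume "z \<in> \<phi> (coset (nsmul (p ^ i) y) ?Bi)"
    then obtain y' where "nsmul (p ^ i) y' - nsmul (p ^ i) y \<in> ?Bi" "z - nsmul (p ^ j) y' \<in> ?Bj"
      unfolding \<phi>_def by auto
    then have "(z - nsmul (p ^ j) y') + (nsmul (p ^ j) y' - nsmul (p ^ j) y) \<in> ?Bj"
      using shift add_subgroup_add[OF sgBj] by blast
    then show "z \<in> coset (nsmul (p ^ j) y) ?Bj"
      by simp
  next
    fix z assume "z \<in> coset (nsmul (p ^ j) y) ?Bj"
    then show "z \<in> \<phi> (coset (nsmul (p ^ i) y) ?Bi)"
      unfolding \<phi>_def using add_subgroup_0[OF sgBi] by (intro CollectI exI[of _ y]) simp
  qed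
  show ?thesis
    unfolding qiso_def
  proof (intro exI[of _ \<phi>] conjI ballI)
    show "bij_betw \<phi> (quot (pM p i) ?Bi) (quot (pM p j) ?Bj)"
    proof (rule bij_betw_imageI)
      show "inj_on \<phi> (quot (pM p i) ?Bi)"
      proof (rule inj_onI)
        fix X Y assume "X \<in> quot (pM p i) ?Bi" "Y \<in> quot (pM p i) ?Bi" "\<phi> X = \<phi> Y"
        then obtain a b where "X = coset (nsmul (p ^ i) a) ?Bi" "Y = coset (nsmul (p ^ i) b) ?Bi"
          "coset (nsmul (p ^ j) a) ?Bj = coset (nsmul (p ^ j) b) ?Bj"
          unfolding quot_pM_iff by (auto simp: \<phi>_coset)
        then show "X = Y"
          using shift coset_eq_iff[OF sgBi] coset_eq_iff[OF sgBj] by simp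
      qed
      show "\<phi> ` quot (pM p i) ?Bi = quot (pM p j) ?Bj"
        by (simp add: quot_pM_eq image_image \<phi>_coset)
    qed
  next
    fix X Y assume "X \<in> quot (pM p i) ?Bi" "Y \<in> quot (pM p i) ?Bi"
    then obtain a b where "X = coset (nsmul (p ^ i) a) ?Bi" "Y = coset (nsmul (p ^ i) b) ?Bi"
      unfolding quot_pM_iff by blast
    then show "\<phi> (qadd X Y) = qadd (\<phi> X) (\<phi> Y)"
      by (simp add: qadd_coset sgBi sgBj \<phi>_coset flip: nsmul_add_right)
  next
    fix g X assume g: "g \<in> carrier G" and "X \<in> quot (pM p i) ?Bi"
    then obtain a where X: "X = coset (nsmul (p ^ i) a) ?Bi"
      unfolding quot_pM_iff by blast
    have "act g ` coset (nsmul (p ^ n) a) (pM p (Suc n)) = coset (nsmul (p ^ n) (act g a)) (pM p (Suc n))"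
      for n
      using additive_image_coset[OF act_additive[OF g]] act_image_submod[OF submod_pM g] act_nsmul[OF g]
      by simp
    then show "\<phi> (act g ` X) = act g ` \<phi> X"
      unfolding X by (simp add: \<phi>_coset)
  qed
qed

theorem act_trivial_if_trivial_on_bottom_layer:
  assumes g: "g \<in> carrier G" and triv: "\<forall>x\<in>pM p (k - 1). act g x = x"
  shows "act g x = x"
proof -
  obtain u where u: "\<And>y::'m. nsmul (u * card (carrier G)) y = y"
    using card_invertible by blast
  have "act g y - y \<in> pM p j" if "j \<ge> 1" for j y
    using that
  proof (induction j arbitrary: y rule: dec_induct)
    case base
    have "nsmul (p ^ (k - 1)) (act g y - y) = act g (nsmul (p ^ (k - 1)) y) - nsmul (p ^ (k - 1)) y"
      by (simp add: nsmul_diff act_nsmul g)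
    also have "\<dots> = 0"
      using triv mem_pM_iff[of "nsmul (p ^ (k - 1)) y" p "k - 1"] by auto
    finally show ?case
      using top_kernel_divisible unfolding mem_pM_iff by simp
  next
    case (step j)
    then show ?case
      using act_minus_id_pM_Suc[OF u g] by blast
  qed
  then have "act g x - x \<in> pM p k"
    using k_ge_1 by blast
  then show ?thesis
    using kill_k unfolding mem_pM_iff by simp
qed

lemma min_generating_mod_indep:
  fixes X :: "'m set"
  assumes min: "min_generating_mod p X" and sum0: "(\<Sum>x\<in>X. nsmul (d x) x) = 0"
  shows "\<forall>x\<in>X. p ^ k dvd d x"
proof -
  have "\<forall>x\<in>X. p ^ j dvd d x" if "j \<le> k" for j
    using that
  proof (induction j)
    case 0
    then show ?case
      by simp
  next
    case (Suc j)
    define e where "e x = d x div p ^ j" for x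
    have de: "d x = p ^ j * e x" if "x \<in> X" for x
      using Suc that unfolding e_def by simp
    define z where "z = (\<Sum>x\<in>X. nsmul (e x) x)"
    have "nsmul (p ^ j) z = (\<Sum>x\<in>X. nsmul (d x) x)"
      unfolding z_def nsmul_sum by (intro sum.cong refl) (simp add: de flip: nsmul_mult)
    moreover have "p ^ (k - 1) = p ^ (k - 1 - j) * p ^ j"
      using Suc.prems by (simp flip: power_add)
    ultimately have "nsmul (p ^ (k - 1)) z = 0"
      using sum0 by (simp add: nsmul_mult)
    then obtain w where w: "z = nsmul p w"
      using top_kernel_divisible by blast
    have "p dvd e x0" if "x0 \<in> X" for x0
    proof (rule ccontr)
      assume "\<not> p dvd e x0"
      then obtain s r where sr: "s * e x0 = p * r + 1"
        using prime_power_inverse_mod[OF prime, of "e x0" 1] by auto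
      define S where "S = (\<Sum>x\<in>X - {x0}. nsmul (s * e x) x)"
      have "nsmul p (nsmul s w) = nsmul s z"
        unfolding w by (rule nsmul_commute)
      also have "\<dots> = nsmul (s * e x0) x0 + S"
        unfolding z_def S_def sum.remove[OF finite that] by (simp add: nsmul_mult nsmul_add_right nsmul_sum)
      also have "nsmul (s * e x0) x0 = nsmul p (nsmul r x0) + x0"
        unfolding sr by (simp only: nsmul_add_left nsmul_mult nsmul_1)
      finally have "x0 = - S + (nsmul p (nsmul s w) - nsmul p (nsmul r x0))"
        by (simp add: algebra_simps)
      moreover have "- S = (\<Sum>x\<in>X - {x0}. nsmul ((p ^ k - 1) * (s * e x)) x)"
        unfolding S_def sum_negf[symmetric]
        by (intro sum.cong refl neg_nsmul kill_k) (simp add: prime_gt_0_nat prime)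
      ultimately have "x0 = (\<Sum>x\<in>X - {x0}. nsmul ((p ^ k - 1) * (s * e x)) x) + nsmul p (nsmul s w - nsmul r x0)"
        by (simp add: nsmul_diff)
      then show False
        using min_generating_mod_irredundant[OF min that, of "\<lambda>x. (p ^ k - 1) * (s * e x)"] by blast
    qed
    then show ?case
      using de by (simp add: mult.commute)
  qed
  then show ?thesis
    by blast
qed

theorem homog_UNIV: "homog (UNIV::'m set) (p ^ k)"
proof -
  obtain X :: "'m set" where min: "min_generating_mod p X"
    using exists_min_generating_mod by blast
  show ?thesis
  proof (rule homog_UNIV_of_basis[OF finite])
    show "p ^ k > 0"
      using prime by (simp add: prime_gt_0_nat)
    show "nsmul (p ^ k) x = 0" for x :: 'm
      by (rule kill_k)
    show "\<exists>c. y = (\<Sum>x\<in>X. nsmul (c x) x)" for y :: 'm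
      using generates_mod_power[of p X k] min kill_k unfolding min_generating_mod_def generates_mod_def by simp
    show "\<forall>x\<in>X. p ^ k dvd d x" if "(\<Sum>x\<in>X. nsmul (d x) x) = 0" for d
      by (rule min_generating_mod_indep[OF min that])
  qed
qed

end

theorem lemma1:
  fixes G :: "('g,'b) monoid_scheme"
    and act :: "'g \<Rightarrow> 'm::{ab_group_add,finite} \<Rightarrow> 'm"
    and p m :: nat
  assumes "group G" and "finite (carrier G)"
    and "prime p" and "\<not> p dvd card (carrier G)" and "m \<ge> 1"
    and "is_Gmodule G act"
    and "\<forall>x::'m. nsmul (p ^ m) x = 0"
    and "\<exists>x::'m. x \<noteq> 0"
  shows "(\<forall>k. expo (UNIV::'m set) = p ^ k \<and>
             (\<forall>N. submod G act N \<and> N \<noteq> UNIV \<longrightarrow> expo N < p ^ k) \<longrightarrow>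
           homog (UNIV::'m set) (p ^ k) \<and>
           (\<forall>i<k. qsimple G act (pM p i) (pM p (Suc i))) \<and>
           (\<forall>i<k. \<forall>j<k. qiso G act (pM p i) (pM p (Suc i)) (pM p j) (pM p (Suc j))) \<and>
           (\<forall>g\<in>carrier G. (\<forall>x\<in>(pM p (k - 1) :: 'm set). act g x = x) \<longrightarrow> (\<forall>x. act g x = x)))
       \<and> (\<not> decomposable G act \<longrightarrow>
           (\<forall>N. submod G act N \<and> N \<noteq> UNIV \<longrightarrow> expo N < expo (UNIV::'m set)))"
proof -
  have coprime: "coprime_Gmodule G act p m"
    using assms
    by (intro coprime_Gmodule.intro Gmodule.intro) (auto simp: Gmodule_axioms_def coprime_Gmodule_axioms_def)
  interpret coprime_Gmodule G act p m
    by (rule coprime)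
  obtain x :: 'm where "x \<noteq> 0"
    using assms(8) by blast
  have "homog (UNIV::'m set) (p ^ k) \<and>
      (\<forall>i<k. qsimple G act (pM p i) (pM p (Suc i))) \<and>
      (\<forall>i<k. \<forall>j<k. qiso G act (pM p i) (pM p (Suc i)) (pM p j) (pM p (Suc j))) \<and>
      (\<forall>g\<in>carrier G. (\<forall>x\<in>(pM p (k - 1) :: 'm set). act g x = x) \<longrightarrow> (\<forall>x. act g x = x))"
    if k: "expo (UNIV::'m set) = p ^ k" and proper: "\<forall>N. submod G act N \<and> N \<noteq> UNIV \<longrightarrow> expo N < p ^ k"
    for k
  proof -
    note k_facts = expo_UNIV_eq_prime_powerD[OF prime kill k \<open>x \<noteq> 0\<close>]
    interpret critical_Gmodule G act p m k
    proof (intro critical_Gmodule.intro[OF coprime] critical_Gmodule_axioms.intro)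
      show "\<forall>y\<in>N. nsmul (p ^ (k - 1)) y = 0" if "submod G act N" "N \<noteq> UNIV" for N :: "'m set"
        using proper that expo_less_prime_power_iff[OF prime k_facts(1)] k_facts(2) by blast
    qed (use k_facts in auto)
    show ?thesis
      using homog_UNIV layer_qsimple layers_qiso act_trivial_if_trivial_on_bottom_layer by blast
  qed
  then show ?thesis
    using expo_proper_submod_less \<open>x \<noteq> 0\<close> by blast
qed

end
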